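(* Let $n\ge1$, let $(w_k)_{k\ge2}$ be complex numbers, and let $h$ be a formal power series in one variable. Then $$\int\mathcal{D}_n(\psi,\bar\psi)\,h\big((\bar\psi,\psi)\big)\exp\Big[\sum_{\substack{A\subseteq\{1,\dots,n\}\\|A|\ge2}}w_{|A|}f_A^{(0)}\Big] =\int\mathcal{D}_n(\psi,\bar\psi)\,h\big((\bar\psi,\psi)\big)\exp\Big[n\sum_{k\ge2}w_k\frac{(\bar\psi,\psi)^{k-1}}{(k-1)!}\Big]\Big[1-\sum_{k\ge2}w_k\frac{(\bar\psi,\psi)^{k-1}}{(k-2)!}\Big]$$ $$=n!\,[\xi^n]\;h(\xi)\Big[1-\sum_{k\ge2}w_k\frac{\xi^{k-1}}{(k-2)!}\Big]\exp\Big[n\sum_{k\ge2}w_k\frac{\xi^{k-1}}{(k-1)!}\Big].$$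
   Context: Grassmann algebra over $\mathbb{C}$ generated by anticommuting $\psi_1,\dots,\psi_n,\bar\psi_1,\dots,\bar\psi_n$; $\int\mathcal{D}_n(\psi,\bar\psi)$ is the Berezin integral returning the coefficient of $\prod_{i=1}^n(\bar\psi_i\psi_i)$ (convention $\int d\bar\psi_i d\psi_i\,\bar\psi_i\psi_i=1$). $\tau_A:=\prod_{i\in A}\bar\psi_i\psi_i$ ($\tau_\emptyset=1$), $f_A^{(0)}:=\sum_{i\in A}\tau_{A\setminus\{i\}}-\sum_{i,j\in A,\,i\ne j}\bar\psi_i\psi_j\tau_{A\setminus\{i,j\}}$, $(\bar\psi,\psi):=\sum_i\bar\psi_i\psi_i$. $[\xi^n]$ denotes the coefficient of $\xi^n$. *)

theory Defs
  imports "HOL-Computational_Algebra.Formal_Power_Series" "HOL-Library.Function_Algebras"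
begin

text \<open>Grassmann algebra over the complex numbers with generators indexed by nat.
  An element is a coefficient function on finite sets S of generator indices;
  the basis monomial e_S is the product of the generators in S in increasing order.
  Addition / subtraction / zero are pointwise (Function_Algebras); the
  Grassmann product is gmul (NOT the pointwise times).\<close>

type_synonym grass = "nat set \<Rightarrow> complex"

definition inv_count :: "nat set \<Rightarrow> nat set \<Rightarrow> nat" where
  "inv_count S T = card {(s,t). s \<in> S \<and> t \<in> T \<and> t < s}"

text \<open>e_S e_T = (-1)^(inversions) e_(S \<union> T) for disjoint S, T, and 0 otherwise.\<close>
definition gmul :: "grass \<Rightarrow> grass \<Rightarrow> grass" where
  "gmul a b = (\<lambda>U. \<Sum>S\<in>Pow U. (-1) ^ inv_count S (U - S) * a S * b (U - S))"

definition gone :: grass where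
  "gone = (\<lambda>S. if S = {} then 1 else 0)"

definition gen :: "nat \<Rightarrow> grass" where
  "gen i = (\<lambda>S. if S = {i} then 1 else 0)"

definition gsc :: "complex \<Rightarrow> grass \<Rightarrow> grass" where
  "gsc c a = (\<lambda>S. c * a S)"

definition gpow :: "grass \<Rightarrow> nat \<Rightarrow> grass" where
  "gpow a k = (gmul a ^^ k) gone"

definition psib :: "nat \<Rightarrow> grass" where "psib i = gen (2 * i)"
definition psi :: "nat \<Rightarrow> grass" where "psi i = gen (2 * i + 1)"

definition pairg :: "nat \<Rightarrow> grass" where "pairg i = gmul (psib i) (psi i)"

text \<open>tau_A = prod_{i in A} psibar_i psi_i (the factors are even, so commute).\<close>
definition tau :: "nat set \<Rightarrow> grass" where
  "tau A = foldr gmul (map pairg (sorted_list_of_set A)) gone"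

definition f0 :: "nat set \<Rightarrow> grass" where
  "f0 A = (\<Sum>i\<in>A. tau (A - {i}))
        - (\<Sum>i\<in>A. \<Sum>j\<in>A - {i}. gmul (gmul (psib i) (psi j)) (tau (A - {i, j})))"

definition dotpsi :: "nat \<Rightarrow> grass" where
  "dotpsi n = (\<Sum>i\<in>{1..n}. pairg i)"

text \<open>Berezin integral: coefficient of prod_{i=1}^n (psibar_i psi_i); this product
  is exactly the basis monomial e_{2,3,...,2n+1} with sign +1.\<close>
definition berezin :: "nat \<Rightarrow> grass \<Rightarrow> complex" where
  "berezin n F = F {2..2 * n + 1}"

text \<open>Substitution of an element X with zero body (nilpotent) into a formal power
  series, in the algebra on the 2n generators: X^k = 0 for k > 2n, so the series is
  a finite sum.\<close>
definition gsubst :: "nat \<Rightarrow> complex fps \<Rightarrow> grass \<Rightarrow> grass" where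
  "gsubst n F X = (\<Sum>k\<le>2 * n + 1. gsc (fps_nth F k) (gpow X k))"

text \<open>Exponential in the algebra on 2n generators: exp(b + N) = e^b sum_k N^k/k!.\<close>
definition gexp :: "nat \<Rightarrow> grass \<Rightarrow> grass" where
  "gexp n X = gsc (exp (X {}))
     (\<Sum>k\<le>2 * n + 1. gsc (1 / fact k) (gpow (X - gsc (X {}) gone) k))"

text \<open>sum_{k>=2} w_k xi^(k-1)/(k-1)!  and  sum_{k>=2} w_k xi^(k-1)/(k-2)! as power series.\<close>
definition wser1 :: "(nat \<Rightarrow> complex) \<Rightarrow> complex fps" where
  "wser1 w = Abs_fps (\<lambda>m. if m = 0 then 0 else w (m + 1) / fact m)"

definition wser2 :: "(nat \<Rightarrow> complex) \<Rightarrow> complex fps" where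
  "wser2 w = Abs_fps (\<lambda>m. if m = 0 then 0 else w (m + 1) / fact (m - 1))"

end

theory Submission
  imports Defs
begin

(* After the algebraic basics
   (bilinearity, associativity, basis monomials, parity and graded commutativity) everything
   happens inside the commutative subalgebra spanned by the pair monomials tau_B,
   B <= {1..n}: there the product is the subset convolution of coefficients,
   (psibar,psi)^k = k! sum_{|B|=k} tau_B, so substituting (psibar,psi) into power series is
   a ring homomorphism F |-> F((psibar,psi)) compatible with exp, and the Berezin integral
   of F((psibar,psi)) is n! [xi^n] F.  This gives the second equality.
   For the first one, reindexing the sum over A shows
     sum_A w_|A| f_A = n W1((psibar,psi)) - P V((psibar,psi)),
   where P = (sum_i psibar_i)(sum_j psi_j) and V(xi) = sum_m w_(m+2) xi^m / m!.  Since P is a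
   product of two odd elements, (P V)^2 = 0, hence exp(n W1 - P V) = exp(n W1) (1 - P V).
   Finally, against a pair-supported element only the diagonal part of P survives the
   Berezin integral, so P V may be replaced by (psibar,psi) V((psibar,psi)) = W2((psibar,psi)). *)

section \<open>Sign bookkeeping\<close>

text \<open>The sign produced when the ordered monomials e_S and e_T are merged into e_(S \<union> T):
  (-1) to the number of inversions.\<close>
definition isign :: "nat set \<Rightarrow> nat set \<Rightarrow> complex" where
  "isign S T = (-1) ^ inv_count S T"

lemma inv_count_un_left:
  assumes "finite S" "finite R" "finite T" "S \<inter> R = {}"
  shows "inv_count (S \<union> R) T = inv_count S T + inv_count R T"
proof -
  have "{(s,t). s \<in> S \<union> R \<and> t \<in> T \<and> t < s} =
        {(s,t). s \<in> S \<and> t \<in> T \<and> t < s} \<union> {(s,t). s \<in> R \<and> t \<in> T \<and> t < s}" by auto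
  moreover have "finite {(s,t). s \<in> S \<and> t \<in> T \<and> t < s}"
    by (rule finite_subset[of _ "S \<times> T"]) (use assms in auto)
  moreover have "finite {(s,t). s \<in> R \<and> t \<in> T \<and> t < s}"
    by (rule finite_subset[of _ "R \<times> T"]) (use assms in auto)
  ultimately show ?thesis unfolding inv_count_def
    by (subst card_Un_disjoint[symmetric]) (use assms in auto)
qed

lemma inv_count_un_right:
  assumes "finite S" "finite R" "finite T" "T \<inter> R = {}"
  shows "inv_count S (T \<union> R) = inv_count S T + inv_count S R"
proof -
  have "{(s,t). s \<in> S \<and> t \<in> T \<union> R \<and> t < s} =
        {(s,t). s \<in> S \<and> t \<in> T \<and> t < s} \<union> {(s,t). s \<in> S \<and> t \<in> R \<and> t < s}" by auto
  moreover have "finite {(s,t). s \<in> S \<and> t \<in> T \<and> t < s}"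
    by (rule finite_subset[of _ "S \<times> T"]) (use assms in auto)
  moreover have "finite {(s,t). s \<in> S \<and> t \<in> R \<and> t < s}"
    by (rule finite_subset[of _ "S \<times> R"]) (use assms in auto)
  ultimately show ?thesis unfolding inv_count_def
    by (subst card_Un_disjoint[symmetric]) (use assms in auto)
qed

lemma inv_count_swap:
  assumes "finite S" "finite T" "S \<inter> T = {}"
  shows "inv_count S T + inv_count T S = card S * card T"
proof -
  have "S \<times> T = {(s,t). s \<in> S \<and> t \<in> T \<and> t < s} \<union> (\<lambda>(a,b). (b,a)) ` {(t,s). t \<in> T \<and> s \<in> S \<and> s < t}"
    using assms(3) by (auto simp: image_iff)
  moreover have "card ((\<lambda>(a,b). (b,a)) ` {(t,s). t \<in> T \<and> s \<in> S \<and> s < t}) = card {(t,s). t \<in> T \<and> s \<in> S \<and> s < t}"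
    by (rule card_image) (auto simp: inj_on_def)
  moreover have "finite {(s,t). s \<in> S \<and> t \<in> T \<and> t < s}"
    by (rule finite_subset[of _ "S \<times> T"]) (use assms in auto)
  moreover have "finite {(t,s). t \<in> T \<and> s \<in> S \<and> s < t}"
    by (rule finite_subset[of _ "T \<times> S"]) (use assms in auto)
  moreover have "{(s,t). s \<in> S \<and> t \<in> T \<and> t < s} \<inter> (\<lambda>(a,b). (b,a)) ` {(t,s). t \<in> T \<and> s \<in> S \<and> s < t} = {}"
    by auto
  ultimately have "card (S \<times> T) = inv_count S T + inv_count T S"
    unfolding inv_count_def by (simp add: card_Un_disjoint)
  then show ?thesis by (simp add: card_cartesian_product)
qed

lemma isign_un_left: "finite S \<Longrightarrow> finite R \<Longrightarrow> finite T \<Longrightarrow> S \<inter> R = {} \<Longrightarrow> isign (S \<union> R) T = isign S T * isign R T"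
  by (simp add: isign_def inv_count_un_left power_add)

lemma isign_un_right: "finite S \<Longrightarrow> finite R \<Longrightarrow> finite T \<Longrightarrow> T \<inter> R = {} \<Longrightarrow> isign S (T \<union> R) = isign S T * isign S R"
  by (simp add: isign_def inv_count_un_right power_add)

lemma isign_sq: "isign S T * isign S T = 1"
  by (simp add: isign_def flip: power_add)

lemma isign_swap: "finite S \<Longrightarrow> finite T \<Longrightarrow> S \<inter> T = {} \<Longrightarrow> isign S T = (-1) ^ (card S * card T) * isign T S"
proof -
  assume a: "finite S" "finite T" "S \<inter> T = {}"
  have "(-1::complex) ^ (card S * card T) * isign T S = (-1) ^ (inv_count S T + inv_count T S) * (-1) ^ inv_count T S"
    using inv_count_swap[OF a] by (simp add: isign_def)
  also have "\<dots> = isign S T * (isign T S * isign T S)" by (simp add: isign_def power_add)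
  finally show ?thesis by (simp add: isign_sq)
qed

lemma isign_empty[simp]: "isign {} T = 1" "isign S {} = 1"
  by (auto simp: isign_def inv_count_def)

section \<open>The Grassmann product: bilinearity and associativity\<close>

lemma sum_fun_apply: "(sum f A) x = (\<Sum>a\<in>A. f a x)"
  by (induct A rule: infinite_finite_induct) auto

lemma gmul_apply: "gmul a b U = (\<Sum>S\<in>Pow U. isign S (U - S) * a S * b (U - S))"
  by (simp add: gmul_def isign_def)

lemma gmul_inf: "infinite U \<Longrightarrow> gmul a b U = 0"
  by (simp add: gmul_apply)

lemma gmul_add_left: "gmul (a + b) c = gmul a c + gmul b c"
  by (simp add: fun_eq_iff gmul_apply algebra_simps sum.distrib)

lemma gmul_add_right: "gmul c (a + b) = gmul c a + gmul c b"
  by (simp add: fun_eq_iff gmul_apply algebra_simps sum.distrib)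

lemma gmul_diff_left: "gmul (a - b) c = gmul a c - gmul b c"
  by (simp add: fun_eq_iff gmul_apply algebra_simps sum_subtractf)

lemma gmul_diff_right: "gmul c (a - b) = gmul c a - gmul c b"
  by (simp add: fun_eq_iff gmul_apply algebra_simps sum_subtractf)

lemma gmul_zero_left[simp]: "gmul 0 c = 0"
  by (simp add: fun_eq_iff gmul_apply)

lemma gmul_zero_right[simp]: "gmul c 0 = 0"
  by (simp add: fun_eq_iff gmul_apply)

lemma gmul_gsc_left: "gmul (gsc k a) c = gsc k (gmul a c)"
  by (simp add: fun_eq_iff gmul_apply gsc_def sum_distrib_left algebra_simps)

lemma gmul_gsc_right: "gmul c (gsc k a) = gsc k (gmul c a)"
  by (simp add: fun_eq_iff gmul_apply gsc_def sum_distrib_left algebra_simps)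

lemma gmul_sum_left: "gmul (\<Sum>x\<in>A. f x) c = (\<Sum>x\<in>A. gmul (f x) c)"
proof (induct A rule: infinite_finite_induct)
  case (insert x F) then show ?case by (simp only: sum.insert[OF insert(1,2)] gmul_add_left insert(3))
next
  case (infinite A) then show ?case by (simp only: sum.infinite[OF infinite] gmul_zero_left)
qed (simp only: sum.empty gmul_zero_left)

lemma gmul_sum_right: "gmul c (\<Sum>x\<in>A. f x) = (\<Sum>x\<in>A. gmul c (f x))"
proof (induct A rule: infinite_finite_induct)
  case (insert x F) then show ?case by (simp only: sum.insert[OF insert(1,2)] gmul_add_right insert(3))
next
  case (infinite A) then show ?case by (simp only: sum.infinite[OF infinite] gmul_zero_right)
qed (simp only: sum.empty gmul_zero_right)

lemma gsc_add: "gsc k (a + b) = gsc k a + gsc k b"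
  by (simp add: fun_eq_iff gsc_def algebra_simps)

lemma gsc_diff: "gsc k (a - b) = gsc k a - gsc k b"
  by (simp add: fun_eq_iff gsc_def algebra_simps)

lemma gsc_sum: "gsc k (\<Sum>x\<in>A. f x) = (\<Sum>x\<in>A. gsc k (f x))"
proof (induct A rule: infinite_finite_induct)
  case (insert x F) then show ?case by (simp only: sum.insert[OF insert(1,2)] gsc_add insert(3))
next
  case (infinite A) then show ?case by (simp add: gsc_def fun_eq_iff)
qed (simp add: gsc_def fun_eq_iff)

lemma gsc_gsc: "gsc k (gsc l a) = gsc (k * l) a"
  by (simp add: fun_eq_iff gsc_def)

lemma gsc_1[simp]: "gsc 1 a = a"
  by (simp add: fun_eq_iff gsc_def)

lemma gsc_0[simp]: "gsc 0 a = 0" "gsc k 0 = 0"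
  by (simp_all add: fun_eq_iff gsc_def)

lemma gsc_add_scal: "gsc (k + l) a = gsc k a + gsc l a"
  by (simp add: fun_eq_iff gsc_def algebra_simps)

lemma gsc_diff_scal: "gsc (k - l) a = gsc k a - gsc l a"
  by (simp add: fun_eq_iff gsc_def algebra_simps)

lemma gsc_sum_scal: "gsc (\<Sum>x\<in>A. f x) a = (\<Sum>x\<in>A. gsc (f x) a)"
  by (induct A rule: infinite_finite_induct) (auto simp: gsc_add_scal)

lemma gsc_Suc: "gsc (of_nat (Suc k)) x = gsc (of_nat k) x + x"
  by (simp add: fun_eq_iff gsc_def algebra_simps)

text \<open>The cocycle identity behind associativity: the sign of splitting U as R, (S - R), (U - S)
  does not depend on whether R or (U - S) is split off first.\<close>
lemma isign_cocycle:
  assumes RS: "R \<subseteq> S" "S \<subseteq> U" and fin: "finite U"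
  shows "isign R (U - R) * isign (S - R) (U - S) = isign S (U - S) * isign R (S - R)"
proof -
  have fR: "finite R" "finite S" "finite (U - S)" "finite (S - R)"
    using RS fin by (auto intro: finite_subset)
  have "isign R ((S - R) \<union> (U - S)) = isign R (S - R) * isign R (U - S)"
    by (rule isign_un_right) (use fR in auto)
  moreover have "U - R = (S - R) \<union> (U - S)" using RS by auto
  ultimately have "isign R (U - R) = isign R (S - R) * isign R (U - S)" by simp
  moreover have "S = R \<union> (S - R)" using RS by auto
  then have "isign S (U - S) = isign R (U - S) * isign (S - R) (U - S)"
    using fR by (metis Diff_disjoint isign_un_left)
  ultimately show ?thesis by simp
qed

text \<open>Associativity: both sides are sums over ordered decompositions U = R + Q + (U-R-Q); the signs agree by additivity of the inversion count.\<close>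
lemma gmul_assoc: "gmul (gmul a b) c = gmul a (gmul b c)"
proof (rule ext)
  fix U
  show "gmul (gmul a b) c U = gmul a (gmul b c) U"
  proof (cases "finite U")
    case False then show ?thesis by (simp add: gmul_inf)
  next
    case fin: True
    have "gmul (gmul a b) c U = (\<Sum>S\<in>Pow U. \<Sum>R\<in>Pow S. isign S (U - S) * isign R (S - R) * a R * b (S - R) * c (U - S))"
      by (simp add: gmul_apply sum_distrib_left sum_distrib_right mult.assoc)
    also have "\<dots> = (\<Sum>(S,R)\<in>Sigma (Pow U) Pow. isign S (U - S) * isign R (S - R) * a R * b (S - R) * c (U - S))"
      using fin by (subst sum.Sigma) (auto intro: finite_subset)
    also have "\<dots> = (\<Sum>(R,Q)\<in>Sigma (Pow U) (\<lambda>R. Pow (U - R)). isign R (U - R) * isign Q (U - R - Q) * a R * b Q * c (U - R - Q))"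
    proof (rule sum.reindex_bij_witness[where i = "\<lambda>(R,Q). (R \<union> Q, R)" and j = "\<lambda>(S,R). (R, S - R)"])
      fix x assume x: "x \<in> Sigma (Pow U) Pow"
      obtain S R where xe: "x = (S,R)" by (cases x)
      with x have RS: "R \<subseteq> S" "S \<subseteq> U" by auto
      have e1: "U - R - (S - R) = U - S" using RS by auto
      have "isign R (U - R) * isign (S - R) (U - S) = isign S (U - S) * isign R (S - R)"
        using RS fin by (rule isign_cocycle)
      then show "(\<lambda>(R,Q). isign R (U - R) * isign Q (U - R - Q) * a R * b Q * c (U - R - Q)) ((\<lambda>(S,R). (R, S - R)) x) =
           (\<lambda>(S,R). isign S (U - S) * isign R (S - R) * a R * b (S - R) * c (U - S)) x"
        using RS by (simp add: xe e1 algebra_simps)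
    qed auto
    also have "\<dots> = (\<Sum>R\<in>Pow U. \<Sum>Q\<in>Pow (U - R). isign R (U - R) * isign Q (U - R - Q) * a R * b Q * c (U - R - Q))"
      using fin by (subst sum.Sigma) (auto intro: finite_subset)
    also have "\<dots> = gmul a (gmul b c) U"
      by (simp add: gmul_apply sum_distrib_left sum_distrib_right mult_ac Diff_Un)
    finally show ?thesis .
  qed
qed

definition basis :: "nat set \<Rightarrow> grass" where
  "basis S = (\<lambda>U. if U = S then 1 else 0)"

lemma gone_basis: "gone = basis {}" by (simp add: gone_def basis_def fun_eq_iff)

lemma gen_basis: "gen i = basis {i}" by (simp add: gen_def basis_def fun_eq_iff)

lemma gen_empty: "gen k {} = 0" by (simp add: gen_def)

lemma gmul_empty: "gmul x y {} = x {} * y {}"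
  by (simp add: gmul_apply)

lemma gmul_basis_right:
  "gmul K (basis T) U = (if T \<subseteq> U \<and> finite U then isign (U - T) T * K (U - T) else 0)"
proof (cases "finite U")
  case False then show ?thesis by (simp add: gmul_inf)
next
  case fin: True
  show ?thesis
  proof (cases "T \<subseteq> U")
    case True
    have "gmul K (basis T) U = (\<Sum>S\<in>Pow U. if S = U - T then isign S (U - S) * K S else 0)"
      unfolding gmul_apply basis_def
    proof (rule sum.cong)
      fix S assume "S \<in> Pow U"
      then have "U - S = T \<longleftrightarrow> S = U - T" using True by auto
      then show "isign S (U - S) * K S * (if U - S = T then 1 else 0) = (if S = U - T then isign S (U - S) * K S else 0)"
        by simp
    qed simp
    also have "\<dots> = isign (U - T) T * K (U - T)"
      using fin True by (simp add: double_diff)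
    finally show ?thesis using True fin by simp
  next
    case False
    have "gmul K (basis T) U = (\<Sum>S\<in>Pow U. 0)"
      unfolding gmul_apply basis_def by (rule sum.cong) (use False in auto)
    then show ?thesis using False by simp
  qed
qed

lemma gmul_basis_left:
  "gmul (basis S) K U = (if S \<subseteq> U \<and> finite U then isign S (U - S) * K (U - S) else 0)"
proof (cases "finite U")
  case False then show ?thesis by (simp add: gmul_inf)
next
  case fin: True
  show ?thesis
  proof (cases "S \<subseteq> U")
    case True
    have "gmul (basis S) K U = (\<Sum>R\<in>Pow U. if R = S then isign R (U - R) * K (U - R) else 0)"
      unfolding gmul_apply basis_def
      by (rule sum.cong) auto
    also have "\<dots> = isign S (U - S) * K (U - S)"
      using fin True by simp
    finally show ?thesis using True fin by simp
  next
    case False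
    have "gmul (basis S) K U = (\<Sum>R\<in>Pow U. 0)"
      unfolding gmul_apply basis_def by (rule sum.cong) (use False in auto)
    then show ?thesis using False by simp
  qed
qed

lemma gmul_basis_basis:
  assumes "finite S" "finite T"
  shows "gmul (basis S) (basis T) = (if S \<inter> T = {} then gsc (isign S T) (basis (S \<union> T)) else 0)"
proof (rule ext)
  fix U
  have "(S \<subseteq> U \<and> U - S = T) \<longleftrightarrow> (S \<inter> T = {} \<and> U = S \<union> T)" by auto
  then show "gmul (basis S) (basis T) U = (if S \<inter> T = {} then gsc (isign S T) (basis (S \<union> T)) else 0) U"
    unfolding gmul_basis_left using assms by (auto simp: basis_def gsc_def)
qed

definition fsupp :: "grass \<Rightarrow> bool" where "fsupp a \<longleftrightarrow> (\<forall>U. infinite U \<longrightarrow> a U = 0)"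

lemma gmul_one_left: "fsupp a \<Longrightarrow> gmul gone a = a"
  by (auto simp: fun_eq_iff gone_basis gmul_basis_left fsupp_def)

lemma gmul_one_right: "fsupp a \<Longrightarrow> gmul a gone = a"
  by (auto simp: fun_eq_iff gone_basis gmul_basis_right fsupp_def)

lemma fsupp_gmul: "fsupp (gmul a b)" by (simp add: fsupp_def gmul_inf)

lemma fsupp_basis: "finite S \<Longrightarrow> fsupp (basis S)" by (auto simp: fsupp_def basis_def)

lemma fsupp_diff: "fsupp a \<Longrightarrow> fsupp b \<Longrightarrow> fsupp (a - b)" by (simp add: fsupp_def)

lemma fsupp_gsc: "fsupp a \<Longrightarrow> fsupp (gsc k a)" by (simp add: fsupp_def gsc_def)

lemma fsupp_sum: "(\<And>x. x \<in> A \<Longrightarrow> fsupp (f x)) \<Longrightarrow> fsupp (\<Sum>x\<in>A. f x)"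
  by (simp add: fsupp_def sum_fun_apply)

lemma fsupp_gone: "fsupp gone" by (simp add: gone_basis fsupp_basis)

section \<open>Parity and graded commutativity\<close>

definition parity :: "grass \<Rightarrow> nat \<Rightarrow> bool" where
  "parity a p \<longleftrightarrow> (\<forall>S. a S \<noteq> 0 \<longrightarrow> card S mod 2 = p)"

lemma parity_gsc: "parity a p \<Longrightarrow> parity (gsc k a) p" by (auto simp: parity_def gsc_def)

lemma parity_sum: "(\<And>x. x \<in> A \<Longrightarrow> parity (f x) p) \<Longrightarrow> parity (\<Sum>x\<in>A. f x) p"
proof -
  assume h: "\<And>x. x \<in> A \<Longrightarrow> parity (f x) p"
  show ?thesis unfolding parity_def
  proof (intro allI impI)
    fix S assume "(\<Sum>x\<in>A. f x) S \<noteq> 0"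
    then have "(\<Sum>x\<in>A. f x S) \<noteq> 0" by (simp add: sum_fun_apply)
    then obtain x where "x \<in> A" "f x S \<noteq> 0" by (rule sum.not_neutral_contains_not_neutral)
    then show "card S mod 2 = p" using h by (auto simp: parity_def)
  qed
qed

lemma parity_basis: "card S mod 2 = p \<Longrightarrow> parity (basis S) p" by (auto simp: parity_def basis_def)

lemma parity_gen: "parity (gen k) 1" by (simp add: gen_basis parity_basis)

lemma parity_gone: "parity gone 0" by (simp add: gone_basis parity_basis)

lemma parity_gmul: "parity a p \<Longrightarrow> parity b q \<Longrightarrow> parity (gmul a b) ((p + q) mod 2)"
proof -
  assume pa: "parity a p" and pb: "parity b q"
  show ?thesis unfolding parity_def
  proof (intro allI impI)
    fix U assume nz: "gmul a b U \<noteq> 0"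
    then have fin: "finite U" using gmul_inf by blast
    from nz obtain S where S: "S \<in> Pow U" "isign S (U - S) * a S * b (U - S) \<noteq> 0"
      unfolding gmul_apply by (rule sum.not_neutral_contains_not_neutral)
    then have "a S \<noteq> 0" "b (U - S) \<noteq> 0" by auto
    then have "card S mod 2 = p" "card (U - S) mod 2 = q" using pa pb unfolding parity_def by blast+
    moreover have "card U = card S + card (U - S)"
    proof -
      have sub: "S \<subseteq> U" using S by auto
      have "card (U - S) = card U - card S" using sub fin by (meson card_Diff_subset finite_subset)
      moreover have "card S \<le> card U" using sub fin by (rule card_mono[rotated])
      ultimately show ?thesis by linarith
    qed
    ultimately show "card U mod 2 = (p + q) mod 2" by (metis mod_add_eq)
  qed
qed

lemma isign_swap_parity:
  assumes "finite S" "finite T" "S \<inter> T = {}" and "card S mod 2 = p" "card T mod 2 = q"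
  shows "isign S T = (-1) ^ (p * q) * isign T S"
proof -
  have "even (card S) \<longleftrightarrow> even p" "even (card T) \<longleftrightarrow> even q" using assms(4,5) by presburger+
  then have "(-1::complex) ^ (card S * card T) = (-1) ^ (p * q)" by (simp add: minus_one_power_iff)
  then show ?thesis using isign_swap[OF assms(1-3)] by simp
qed

lemma gmul_comm_parity:
  assumes pa: "parity a p" and pb: "parity b q"
  shows "gmul a b = gsc ((-1) ^ (p * q)) (gmul b a)"
proof (rule ext)
  fix U
  show "gmul a b U = gsc ((-1) ^ (p * q)) (gmul b a) U"
  proof (cases "finite U")
    case False then show ?thesis by (simp add: gmul_inf gsc_def)
  next
    case fin: True
    have "gmul b a U = (\<Sum>S\<in>Pow U. isign (U - S) S * b (U - S) * a S)"
      unfolding gmul_apply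
      by (rule sum.reindex_bij_witness[where i = "\<lambda>S. U - S" and j = "\<lambda>S. U - S"]) (auto simp: double_diff)
    then have "gsc ((-1) ^ (p * q)) (gmul b a) U = (\<Sum>S\<in>Pow U. (-1) ^ (p * q) * (isign (U - S) S * b (U - S) * a S))"
      by (simp add: gsc_def sum_distrib_left)
    also have "\<dots> = (\<Sum>S\<in>Pow U. isign S (U - S) * a S * b (U - S))"
    proof (rule sum.cong)
      fix S assume S: "S \<in> Pow U"
      show "(-1) ^ (p * q) * (isign (U - S) S * b (U - S) * a S) = isign S (U - S) * a S * b (U - S)"
      proof (cases "a S = 0 \<or> b (U - S) = 0")
        case True then show ?thesis by auto
      next
        case False
        then have "card S mod 2 = p" "card (U - S) mod 2 = q" using pa pb unfolding parity_def by blast+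
        moreover have "finite S" "finite (U - S)" using S fin by (auto intro: finite_subset)
        ultimately have "isign S (U - S) = (-1) ^ (p * q) * isign (U - S) S"
          by (intro isign_swap_parity) auto
        then show ?thesis by (simp add: algebra_simps)
      qed
    qed simp
    finally show ?thesis by (simp add: gmul_apply)
  qed
qed

lemma gmul_comm_even_left: "parity a 0 \<Longrightarrow> parity b q \<Longrightarrow> gmul a b = gmul b a"
  using gmul_comm_parity[of a 0 b q] by simp

lemma gmul_comm_even_right: "parity a p \<Longrightarrow> parity b 0 \<Longrightarrow> gmul a b = gmul b a"
  using gmul_comm_parity[of a p b 0] by simp

lemma gmul_anti_odd: "parity a 1 \<Longrightarrow> parity b 1 \<Longrightarrow> gmul a b = gsc (-1) (gmul b a)"
  using gmul_comm_parity[of a 1 b 1] by simp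

lemma gmul_odd_sq: "parity a 1 \<Longrightarrow> gmul a a = 0"
proof -
  assume h1: "parity a 1"
  have "gmul a a = gsc (-1) (gmul a a)" by (rule gmul_anti_odd[OF h1 h1])
  then have h: "\<And>U. gmul a a U = - gmul a a U" by (metis gsc_def mult_minus1)
  show ?thesis
  proof (rule ext)
    fix U
    have "gmul a a U = - gmul a a U" by (rule h)
    then have "2 * gmul a a U = 0" by simp
    then show "gmul a a U = 0 U" by simp
  qed
qed

section \<open>Pair monomials\<close>

definition pairs :: "nat set \<Rightarrow> nat set" where
  "pairs B = (\<lambda>i. 2 * i) ` B \<union> (\<lambda>i. 2 * i + 1) ` B"

lemma mem_pairs: "x \<in> pairs B \<longleftrightarrow> x div 2 \<in> B"
proof -
  have a: "x \<in> pairs B \<longleftrightarrow> (\<exists>i\<in>B. x = 2 * i \<or> x = 2 * i + 1)" by (auto simp: pairs_def)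
  have b: "\<And>i. (x = 2 * i \<or> x = 2 * i + 1) \<longleftrightarrow> i = x div 2" by presburger
  show ?thesis unfolding a b by auto
qed

lemma pairs_insert: "pairs (insert i A) = {2 * i, 2 * i + 1} \<union> pairs A" by (auto simp: pairs_def)

lemma pairs_finite: "finite B \<Longrightarrow> finite (pairs B)" by (simp add: pairs_def)

lemma pairs_un: "pairs (A \<union> B) = pairs A \<union> pairs B" by (auto simp: pairs_def)

lemma pairs_int: "pairs A \<inter> pairs B = {} \<longleftrightarrow> A \<inter> B = {}"
proof
  assume h: "pairs A \<inter> pairs B = {}"
  show "A \<inter> B = {}"
  proof (rule equals0I)
    fix i assume "i \<in> A \<inter> B"
    then have "2 * i \<in> pairs A \<inter> pairs B" by (simp add: mem_pairs)
    with h show False by simp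
  qed
next
  assume "A \<inter> B = {}" then show "pairs A \<inter> pairs B = {}" by (auto simp: mem_pairs)
qed

lemma pairs_inj: "pairs A = pairs B \<longleftrightarrow> A = B"
proof
  assume h: "pairs A = pairs B"
  show "A = B"
  proof (rule set_eqI)
    fix i
    have "i \<in> A \<longleftrightarrow> 2 * i \<in> pairs A" by (simp add: mem_pairs)
    also have "\<dots> \<longleftrightarrow> 2 * i \<in> pairs B" by (simp add: h)
    also have "\<dots> \<longleftrightarrow> i \<in> B" by (simp add: mem_pairs)
    finally show "i \<in> A \<longleftrightarrow> i \<in> B" .
  qed
qed simp

lemma pairs_empty[simp]: "pairs {} = {}" by (simp add: pairs_def)

lemma empty_eq_pairs: "({} = pairs B) = ({} = B)"
  by (metis pairs_empty pairs_inj)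

lemma pairs_card: "finite B \<Longrightarrow> card (pairs B) = 2 * card B"
proof -
  assume f: "finite B"
  have "card (pairs B) = card ((\<lambda>i. 2 * i) ` B) + card ((\<lambda>i. 2 * i + 1) ` B)"
    unfolding pairs_def using f by (intro card_Un_disjoint) (auto, presburger)
  also have "\<dots> = card B + card B"
    by (subst card_image, simp add: inj_on_def)+ simp
  finally show ?thesis by simp
qed

lemma pairs_range: "pairs {1..n} = {2..2 * n + 1}"
proof (rule set_eqI)
  fix x :: nat
  have "1 \<le> x div 2 \<longleftrightarrow> 2 \<le> x" by presburger
  moreover have "x div 2 \<le> n \<longleftrightarrow> x \<le> 2 * n + 1" by presburger
  ultimately show "x \<in> pairs {1..n} \<longleftrightarrow> x \<in> {2..2 * n + 1}" by (simp add: mem_pairs)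
qed

lemma inv_count_single: "inv_count {s} T = card {t \<in> T. t < s}"
proof -
  have "{(s', t). s' \<in> {s} \<and> t \<in> T \<and> t < s'} = (\<lambda>t. (s, t)) ` {t \<in> T. t < s}" by auto
  then show ?thesis unfolding inv_count_def by (simp add: card_image inj_on_def)
qed

text \<open>Merging two disjoint sets of pairs produces an even number of inversions, so pair monomials commute without sign.\<close>
lemma inv_count_pair_even:
  assumes "finite T" "2 * i \<notin> T"
  shows "even (inv_count {2 * i, 2 * i + 1} T)"
proof -
  have "inv_count {2 * i, 2 * i + 1} T = inv_count {2 * i} T + inv_count {2 * i + 1} T"
  proof -
    have "{2 * i, 2 * i + 1} = {2 * i} \<union> {2 * i + 1}" by auto
    then show ?thesis using inv_count_un_left[of "{2 * i}" "{2 * i + 1}" T] assms by simp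
  qed
  moreover have "{t \<in> T. t < 2 * i + 1} = {t \<in> T. t < 2 * i}"
    using assms(2) by (auto simp: less_Suc_eq)
  ultimately show ?thesis by (simp add: inv_count_single)
qed

lemma inv_count_pairs_even:
  assumes "finite A" "finite B" "A \<inter> B = {}"
  shows "even (inv_count (pairs A) (pairs B))"
  using assms
proof (induct A rule: finite_induct)
  case empty then show ?case by (simp add: inv_count_def)
next
  case (insert i A)
  have e: "pairs (insert i A) = {2 * i, 2 * i + 1} \<union> pairs A" by (rule pairs_insert)
  have "inv_count (pairs (insert i A)) (pairs B) = inv_count {2 * i, 2 * i + 1} (pairs B) + inv_count (pairs A) (pairs B)"
    unfolding e using insert by (intro inv_count_un_left) (auto simp: pairs_finite mem_pairs)
  moreover have "even (inv_count {2 * i, 2 * i + 1} (pairs B))"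
    using insert by (intro inv_count_pair_even) (auto simp: pairs_finite mem_pairs)
  ultimately show ?case using insert by simp
qed

lemma pairg_basis: "pairg i = basis {2 * i, 2 * i + 1}"
proof -
  have "inv_count {2 * i} {2 * i + 1} = 0" by (simp add: inv_count_single)
  moreover have "{2 * i} \<union> {2 * i + 1} = {2 * i, 2 * i + 1}" by auto
  ultimately show ?thesis
    by (simp add: pairg_def psib_def psi_def gen_basis gmul_basis_basis isign_def)
qed

lemma pairg_times_basis_pairs:
  assumes fin: "finite C" and below: "\<And>i. i \<in> C \<Longrightarrow> m < i"
  shows "gmul (pairg m) (basis (pairs C)) = basis (pairs (insert m C))"
proof -
  have gt: "2 * m + 1 < t" if "t \<in> pairs C" for t
  proof -
    have "m < t div 2" using that below by (simp add: mem_pairs)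
    then show ?thesis by linarith
  qed
  have "{(s,t). s \<in> {2 * m, 2 * m + 1} \<and> t \<in> pairs C \<and> t < s} = {}"
    using gt by fastforce
  then have "inv_count {2 * m, 2 * m + 1} (pairs C) = 0" unfolding inv_count_def by (simp only: card.empty)
  moreover have "{2 * m, 2 * m + 1} \<inter> pairs C = {}" using gt by fastforce
  ultimately show ?thesis
    using fin by (simp add: pairg_basis gmul_basis_basis isign_def pairs_finite pairs_insert)
qed

text \<open>tau_B is the basis monomial on pairs B with sign +1 (the factors are listed in increasing order).\<close>
lemma tau_basis: "finite B \<Longrightarrow> tau B = basis (pairs B)"
proof (induct "card B" arbitrary: B rule: less_induct)
  case less
  show ?case
  proof (cases "B = {}")
    case True then show ?thesis by (simp add: tau_def gone_basis)
  next
    case False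
    define m where "m = Min B"
    have mB: "m \<in> B" using False less(2) by (simp add: m_def)
    have "card (B - {m}) < card B" using mB less(2) by (meson card_Diff1_less)
    then have IH: "tau (B - {m}) = basis (pairs (B - {m}))" using less by simp
    have "tau B = gmul (pairg m) (tau (B - {m}))"
      using False less(2) by (simp add: tau_def m_def sorted_list_of_set_nonempty)
    also have "\<dots> = basis (pairs (insert m (B - {m})))"
      unfolding IH using less(2) by (intro pairg_times_basis_pairs) (auto simp: m_def order.strict_iff_order)
    finally show ?thesis using mB by (simp add: insert_absorb)
  qed
qed

lemma tau_single: "tau {i} = pairg i"
  by (simp add: tau_basis pairg_basis pairs_insert)

lemma tau_mul:
  assumes "finite A" "finite B"
  shows "gmul (tau A) (tau B) = (if A \<inter> B = {} then tau (A \<union> B) else 0)"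
proof -
  have "A \<inter> B = {} \<Longrightarrow> isign (pairs A) (pairs B) = 1"
    using inv_count_pairs_even[OF assms] by (simp add: isign_def)
  then show ?thesis using assms
    by (simp add: tau_basis gmul_basis_basis pairs_finite pairs_int pairs_un)
qed

lemma parity_tau: "finite B \<Longrightarrow> parity (tau B) 0"
  by (simp add: tau_basis parity_basis pairs_card)

lemma fsupp_tau: "finite B \<Longrightarrow> fsupp (tau B)"
  by (simp add: tau_basis fsupp_basis pairs_finite)

section \<open>The algebra spanned by pair monomials\<close>

text \<open>They form a commutative algebra whose product is
  the subset convolution of coefficients, since tau_A tau_B = tau_(A \<union> B) for disjoint A, B
  and 0 otherwise.\<close>
definition tau_comb :: "nat \<Rightarrow> (nat set \<Rightarrow> complex) \<Rightarrow> grass" where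
  "tau_comb n c = (\<Sum>B\<in>Pow {1..n}. gsc (c B) (tau B))"

lemma tau_comb_cong: "(\<And>B. B \<subseteq> {1..n} \<Longrightarrow> c B = d B) \<Longrightarrow> tau_comb n c = tau_comb n d"
  unfolding tau_comb_def by (rule sum.cong) auto

lemma tau_comb_gsc: "gsc k (tau_comb n c) = tau_comb n (\<lambda>B. k * c B)"
  by (simp add: tau_comb_def gsc_sum gsc_gsc)

lemma tau_comb_sum: "(\<Sum>x\<in>A. tau_comb n (c x)) = tau_comb n (\<lambda>B. \<Sum>x\<in>A. c x B)"
  unfolding tau_comb_def gsc_sum_scal by (rule sum.swap)

lemma tau_comb_apply: "tau_comb n c U = (\<Sum>B\<in>Pow {1..n}. if U = pairs B then c B else 0)"
  unfolding tau_comb_def sum_fun_apply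
proof (rule sum.cong)
  fix B assume "B \<in> Pow {1..n}"
  then have "finite B" by (auto intro: finite_subset)
  then show "gsc (c B) (tau B) U = (if U = pairs B then c B else 0)"
    by (simp add: gsc_def tau_basis basis_def)
qed simp

lemma tau_comb_top: "tau_comb n c {2..2 * n + 1} = c {1..n}"
proof -
  have "tau_comb n c {2..2 * n + 1} = (\<Sum>B\<in>Pow {1..n}. if {1..n} = B then c B else 0)"
    by (simp only: tau_comb_apply pairs_range[symmetric] pairs_inj)
  also have "\<dots> = c {1..n}" by (subst sum.delta') auto
  finally show ?thesis .
qed

lemma tau_comb_empty: "tau_comb n c {} = c {}"
proof -
  have "tau_comb n c {} = (\<Sum>B\<in>Pow {1..n}. if {} = B then c B else 0)"
    by (simp only: tau_comb_apply empty_eq_pairs)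
  also have "\<dots> = c {}" by (subst sum.delta') auto
  finally show ?thesis .
qed

lemma parity_tau_comb: "parity (tau_comb n c) 0"
  unfolding tau_comb_def by (intro parity_sum parity_gsc parity_tau) (auto intro: finite_subset)

lemma fsupp_tau_comb: "fsupp (tau_comb n c)"
  unfolding tau_comb_def by (intro fsupp_sum fsupp_gsc fsupp_tau) (auto intro: finite_subset)

definition pair_supp :: "grass \<Rightarrow> bool" where
  "pair_supp a \<longleftrightarrow> (\<forall>U. a U \<noteq> 0 \<longrightarrow> (\<forall>k. 2 * k \<in> U \<longleftrightarrow> 2 * k + 1 \<in> U))"

lemma pair_supp_tau_comb: "pair_supp (tau_comb n c)"
  unfolding pair_supp_def
proof (intro allI impI)
  fix U k assume "tau_comb n c U \<noteq> 0"
  then obtain B where "B \<in> Pow {1..n}" "(if U = pairs B then c B else 0) \<noteq> 0"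
    unfolding tau_comb_apply by (rule sum.not_neutral_contains_not_neutral)
  then have "U = pairs B" by (auto split: if_splits)
  then show "2 * k \<in> U \<longleftrightarrow> 2 * k + 1 \<in> U" by (simp add: mem_pairs)
qed

lemma tau_comb_mult: "gmul (tau_comb n c) (tau_comb n d) = tau_comb n (\<lambda>B. \<Sum>B1\<in>Pow B. c B1 * d (B - B1))"
proof -
  let ?P = "Pow {1..n}"
  have "gmul (tau_comb n c) (tau_comb n d) = (\<Sum>B1\<in>?P. \<Sum>B2\<in>?P. gsc (c B1 * d B2) (gmul (tau B1) (tau B2)))"
    unfolding tau_comb_def by (simp only: gmul_sum_left, simp only: gmul_sum_right, simp only: gmul_gsc_left gmul_gsc_right gsc_gsc, simp add: ac_simps)
  also have "\<dots> = (\<Sum>B1\<in>?P. \<Sum>B2\<in>?P. if B1 \<inter> B2 = {} then gsc (c B1 * d B2) (tau (B1 \<union> B2)) else 0)"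
  proof (intro sum.cong refl)
    fix B1 B2 assume "B1 \<in> ?P" "B2 \<in> ?P"
    then have "finite B1" "finite B2" by (auto intro: finite_subset)
    then show "gsc (c B1 * d B2) (gmul (tau B1) (tau B2)) = (if B1 \<inter> B2 = {} then gsc (c B1 * d B2) (tau (B1 \<union> B2)) else 0)"
      by (simp add: tau_mul)
  qed
  also have "\<dots> = (\<Sum>(B1,B2)\<in>?P \<times> ?P. if B1 \<inter> B2 = {} then gsc (c B1 * d B2) (tau (B1 \<union> B2)) else 0)"
    by (simp only: sum.cartesian_product)
  also have "\<dots> = (\<Sum>x\<in>{x \<in> ?P \<times> ?P. case x of (B1, B2) \<Rightarrow> B1 \<inter> B2 = {}}. case x of (B1,B2) \<Rightarrow> gsc (c B1 * d B2) (tau (B1 \<union> B2)))"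
    by (subst sum.inter_filter) (auto intro!: sum.cong split: prod.splits)
  also have "\<dots> = (\<Sum>(B,B1)\<in>Sigma ?P Pow. gsc (c B1 * d (B - B1)) (tau B))"
  proof (rule sum.reindex_bij_witness[where i = "\<lambda>(B,B1). (B1, B - B1)" and j = "\<lambda>(B1,B2). (B1 \<union> B2, B1)"])
    fix x assume "x \<in> {x \<in> ?P \<times> ?P. case x of (B1, B2) \<Rightarrow> B1 \<inter> B2 = {}}"
    then obtain B1 B2 where "x = (B1, B2)" "B1 \<inter> B2 = {}" by auto
    then show "(case (case x of (B1, B2) \<Rightarrow> (B1 \<union> B2, B1)) of (B, B1) \<Rightarrow> gsc (c B1 * d (B - B1)) (tau B)) =
               (case x of (B1, B2) \<Rightarrow> gsc (c B1 * d B2) (tau (B1 \<union> B2)))"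
      by (simp add: Un_Diff Int_commute Diff_triv)
  qed auto
  also have "\<dots> = (\<Sum>B\<in>?P. \<Sum>B1\<in>Pow B. gsc (c B1 * d (B - B1)) (tau B))"
    by (subst sum.Sigma) (auto intro: finite_subset)
  also have "\<dots> = tau_comb n (\<lambda>B. \<Sum>B1\<in>Pow B. c B1 * d (B - B1))"
    unfolding tau_comb_def by (simp add: gsc_sum_scal)
  finally show ?thesis .
qed

lemma tau_comb_nonempty:
  "tau_comb n (\<lambda>B. if B = {} then 0 else u B) = (\<Sum>B\<in>{B\<in>Pow {1..n}. B \<noteq> {}}. gsc (u B) (tau B))"
proof -
  have "tau_comb n (\<lambda>B. if B = {} then 0 else u B) = (\<Sum>B\<in>Pow {1..n}. if B \<noteq> {} then gsc (u B) (tau B) else 0)"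
    unfolding tau_comb_def by (rule sum.cong) auto
  also have "\<dots> = (\<Sum>B\<in>{B\<in>Pow {1..n}. B \<noteq> {}}. gsc (u B) (tau B))"
    by (rule sum.inter_filter[symmetric]) simp
  finally show ?thesis .
qed

lemma dotpsi_tau_comb: "dotpsi n = tau_comb n (\<lambda>B. if card B = 1 then 1 else 0)"
proof -
  have "tau_comb n (\<lambda>B. if card B = 1 then 1 else 0) = (\<Sum>B\<in>Pow {1..n}. if card B = 1 then tau B else 0)"
    unfolding tau_comb_def by (rule sum.cong) auto
  also have "\<dots> = (\<Sum>B\<in>{B\<in>Pow {1..n}. card B = 1}. tau B)"
    by (rule sum.inter_filter[symmetric]) simp
  also have "{B\<in>Pow {1..n}. card B = 1} = (\<lambda>i. {i}) ` {1..n}"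
    by (auto simp: card_1_singleton_iff)
  also have "(\<Sum>B\<in>(\<lambda>i. {i}) ` {1..n}. tau B) = (\<Sum>i\<in>{1..n}. tau {i})"
    by (rule sum.reindex_cong[where l = "\<lambda>i. {i}"]) (auto simp: inj_on_def)
  finally show ?thesis by (simp add: dotpsi_def tau_single)
qed

lemma gone_tau_comb: "gone = tau_comb n (\<lambda>B. if B = {} then 1 else 0)"
proof -
  have "tau_comb n (\<lambda>B. if B = {} then 1 else 0) = (\<Sum>B\<in>Pow {1..n}. if B = {} then tau B else 0)"
    unfolding tau_comb_def by (rule sum.cong) auto
  also have "\<dots> = tau {}" by simp
  finally show ?thesis by (simp add: tau_basis gone_basis)
qed

section \<open>Powers of (psibar, psi) and sums over subsets\<close>

lemma gpow_Suc: "gpow a (Suc k) = gmul a (gpow a k)"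
  by (simp add: gpow_def)

lemma gpow_0: "gpow a 0 = gone"
  by (simp add: gpow_def)

lemma gpow_one: "fsupp a \<Longrightarrow> gpow a 1 = a"
  by (simp add: gpow_Suc gpow_0 gmul_one_right)

lemma parity_gpow: "parity a 0 \<Longrightarrow> parity (gpow a k) 0"
proof (induct k)
  case 0 then show ?case by (simp add: gpow_0 parity_gone)
next
  case (Suc k) then show ?case using parity_gmul[of a 0 "gpow a k" 0] by (simp add: gpow_Suc)
qed

lemma fsupp_gpow: "fsupp (gpow a k)"
  by (cases k) (simp_all add: gpow_0 gpow_Suc fsupp_gone fsupp_gmul)

lemma sum_pow_card:
  assumes "finite B"
  shows "(\<Sum>B1\<in>Pow B. g (card B1)) = (\<Sum>k\<le>card B. of_nat (card B choose k) * g k)"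
proof -
  have "(\<Sum>B1\<in>Pow B. g (card B1)) = (\<Sum>k\<in>{..card B}. \<Sum>B1\<in>{B1\<in>Pow B. card B1 = k}. g (card B1))"
    by (rule sum.group[symmetric]) (use assms in \<open>auto intro: card_mono\<close>)
  also have "\<dots> = (\<Sum>k\<le>card B. of_nat (card B choose k) * g k)"
  proof (rule sum.cong)
    fix k
    have "{B1\<in>Pow B. card B1 = k} = {B1. B1 \<subseteq> B \<and> card B1 = k}" by auto
    then have "card {B1\<in>Pow B. card B1 = k} = card B choose k" using assms by (simp add: n_subsets)
    moreover have "(\<Sum>B1\<in>{B1\<in>Pow B. card B1 = k}. g (card B1)) = (\<Sum>B1\<in>{B1\<in>Pow B. card B1 = k}. g k)"
      by (rule sum.cong) auto
    ultimately show "(\<Sum>B1\<in>{B1\<in>Pow B. card B1 = k}. g (card B1)) = of_nat (card B choose k) * g k"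
      by simp
  qed simp
  finally show ?thesis .
qed

lemma conv_card:
  assumes "finite B"
  shows "(\<Sum>B1\<in>Pow B. f (card B1) * g (card (B - B1))) = (\<Sum>k\<le>card B. of_nat (card B choose k) * (f k * g (card B - k)))"
proof -
  have "(\<Sum>B1\<in>Pow B. f (card B1) * g (card (B - B1))) = (\<Sum>B1\<in>Pow B. f (card B1) * g (card B - card B1))"
  proof (rule sum.cong)
    fix B1 assume "B1 \<in> Pow B"
    then have "card (B - B1) = card B - card B1" using assms by (meson PowD card_Diff_subset finite_subset)
    then show "f (card B1) * g (card (B - B1)) = f (card B1) * g (card B - card B1)" by simp
  qed simp
  also have "\<dots> = (\<Sum>k\<le>card B. of_nat (card B choose k) * (f k * g (card B - k)))"
    by (rule sum_pow_card[OF assms])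
  finally show ?thesis .
qed

lemma sum_subsets_marked:
  fixes g :: "'a set \<Rightarrow> 'a \<Rightarrow> 'b::comm_monoid_add"
  assumes fin: "finite I"
  shows "(\<Sum>A\<in>{A. A \<subseteq> I \<and> k + 1 \<le> card A}. \<Sum>i\<in>A. g A i) =
         (\<Sum>i\<in>I. \<Sum>B\<in>{B. B \<subseteq> I - {i} \<and> k \<le> card B}. g (insert i B) i)"
proof -
  let ?S = "{A. A \<subseteq> I \<and> k + 1 \<le> card A}"
  let ?T = "Sigma I (\<lambda>i. {B. B \<subseteq> I - {i} \<and> k \<le> card B})"
  have fin_sub: "finite A" if "A \<subseteq> I" for A using that fin by (rule finite_subset)
  have "(\<Sum>A\<in>?S. \<Sum>i\<in>A. g A i) = (\<Sum>(A, i)\<in>Sigma ?S (\<lambda>A. A). g A i)"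
    by (rule sum.Sigma) (auto intro: rev_finite_subset[of "Pow I"] fin fin_sub)
  also have "\<dots> = (\<Sum>(i, B)\<in>?T. g (insert i B) i)"
  proof (rule sum.reindex_bij_witness[where i = "\<lambda>(i, B). (insert i B, i)" and j = "\<lambda>(A, i). (i, A - {i})"])
    fix a assume "a \<in> Sigma ?S (\<lambda>A. A)"
    then obtain A i where a: "a = (A, i)" "A \<subseteq> I" "k + 1 \<le> card A" "i \<in> A" by auto
    then have "card (A - {i}) = card A - 1" by (simp add: fin_sub)
    then show "(case a of (A, i) \<Rightarrow> (i, A - {i})) \<in> ?T" using a by auto
    show "(case case a of (A, i) \<Rightarrow> (i, A - {i}) of (i, B) \<Rightarrow> (insert i B, i)) = a"
      using a by auto
    show "(case case a of (A, i) \<Rightarrow> (i, A - {i}) of (i, B) \<Rightarrow> g (insert i B) i) = (case a of (A, i) \<Rightarrow> g A i)"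
      using a by (simp add: insert_absorb)
  next
    fix b assume "b \<in> ?T"
    then obtain i B where b: "b = (i, B)" "i \<in> I" "B \<subseteq> I - {i}" "k \<le> card B" by auto
    have "finite B" using b(3) fin_sub by blast
    moreover have "i \<notin> B" using b(3) by blast
    ultimately have "card (insert i B) = card B + 1" by simp
    then show "(case b of (i, B) \<Rightarrow> (insert i B, i)) \<in> Sigma ?S (\<lambda>A. A)" using b by auto
    show "(case case b of (i, B) \<Rightarrow> (insert i B, i) of (A, i) \<Rightarrow> (i, A - {i})) = b"
      using b by auto
  qed
  also have "\<dots> = (\<Sum>i\<in>I. \<Sum>B\<in>{B. B \<subseteq> I - {i} \<and> k \<le> card B}. g (insert i B) i)"
    by (rule sum.Sigma[symmetric]) (auto intro: rev_finite_subset[of "Pow I"] fin)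
  finally show ?thesis .
qed
lemma gpow_dotpsi: "gpow (dotpsi n) k = tau_comb n (\<lambda>B. if card B = k then fact k else 0)"
proof (induct k)
  case 0
  show ?case unfolding gpow_0 gone_tau_comb[of n]
  proof (rule tau_comb_cong)
    fix B assume "B \<subseteq> {1..n}"
    then have "finite B" by (auto intro: finite_subset)
    then show "(if B = {} then 1 else 0) = (if card B = 0 then fact 0 else 0)" by simp
  qed
next
  case (Suc k)
  have "gpow (dotpsi n) (Suc k) = gmul (dotpsi n) (gpow (dotpsi n) k)" by (rule gpow_Suc)
  also have "\<dots> = tau_comb n (\<lambda>B. \<Sum>B1\<in>Pow B. (if card B1 = 1 then 1 else 0) * (if card (B - B1) = k then fact k else 0))"
    by (subst Suc, subst dotpsi_tau_comb, rule tau_comb_mult)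
  also have "\<dots> = tau_comb n (\<lambda>B. if card B = Suc k then fact (Suc k) else 0)"
  proof (rule tau_comb_cong)
    fix B assume "B \<subseteq> {1..n}"
    then have fB: "finite B" by (auto intro: finite_subset)
    have "(\<Sum>B1\<in>Pow B. (if card B1 = 1 then 1 else 0) * (if card (B - B1) = k then fact k else 0)) =
          (\<Sum>j\<le>card B. of_nat (card B choose j) * ((if j = 1 then 1 else 0) * (if card B - j = k then fact k else 0)))"
      by (rule conv_card[OF fB, where f = "\<lambda>j. if j = 1 then 1 else 0" and g = "\<lambda>j. if j = k then fact k else 0"])
    also have "\<dots> = (\<Sum>j\<le>card B. if j = 1 then of_nat (card B) * (if card B - 1 = k then fact k else 0) else 0)"
      by (rule sum.cong) auto
    also have "\<dots> = (if card B = Suc k then fact (Suc k) else 0)"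
      by (cases "card B") (auto simp: algebra_simps)
    finally show "(\<Sum>B1\<in>Pow B. (if card B1 = 1 then 1 else 0) * (if card (B - B1) = k then fact k else 0)) =
          (if card B = Suc k then fact (Suc k) else 0)" .
  qed
  finally show ?case .
qed

section \<open>Substituting (psibar, psi) into a power series\<close>

text \<open>The coefficient of tau_B in F((psibar,psi)) is |B|! F_{|B|}; this depends only on the first n coefficients of F.\<close>
definition subst_coeff :: "complex fps \<Rightarrow> nat set \<Rightarrow> complex" where
  "subst_coeff F B = fact (card B) * fps_nth F (card B)"

lemma card_sub_interval_le: "B \<subseteq> {1..n} \<Longrightarrow> card B \<le> n"
  using card_mono[of "{1..n}" B] by simp

lemma finite_sub_interval: "A \<subseteq> {m..(n::nat)} \<Longrightarrow> finite A"
  using finite_subset by blast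

lemma finite_sub_interval_diff: "A \<subseteq> {m..(n::nat)} - X \<Longrightarrow> finite A"
  using finite_subset by blast

lemma gsubst_dotpsi: "gsubst n F (dotpsi n) = tau_comb n (subst_coeff F)"
proof -
  have "gsubst n F (dotpsi n) = (\<Sum>k\<le>2 * n + 1. tau_comb n (\<lambda>B. fps_nth F k * (if card B = k then fact k else 0)))"
    unfolding gsubst_def gpow_dotpsi tau_comb_gsc by simp
  also have "\<dots> = tau_comb n (\<lambda>B. \<Sum>k\<le>2 * n + 1. fps_nth F k * (if card B = k then fact k else 0))"
    by (rule tau_comb_sum)
  also have "\<dots> = tau_comb n (subst_coeff F)"
  proof (rule tau_comb_cong)
    fix B assume "B \<subseteq> {1..n}"
    then have "card B \<le> n" by (rule card_sub_interval_le)
    have "(\<Sum>k\<le>2 * n + 1. fps_nth F k * (if card B = k then fact k else 0)) =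
          (\<Sum>k\<le>2 * n + 1. if card B = k then fps_nth F k * fact k else 0)"
      by (rule sum.cong) auto
    also have "\<dots> = subst_coeff F B" using \<open>card B \<le> n\<close> by (subst sum.delta') (auto simp: subst_coeff_def)
    finally show "(\<Sum>k\<le>2 * n + 1. fps_nth F k * (if card B = k then fact k else 0)) = subst_coeff F B" .
  qed
  finally show ?thesis .
qed

lemma binomial_fact_complex: "k \<le> m \<Longrightarrow> (of_nat (m choose k) :: complex) * (fact k * fact (m - k)) = fact m"
proof -
  assume "k \<le> m"
  then have "fact k * fact (m - k) * (m choose k) = fact m" by (rule binomial_fact_lemma)
  then have "(of_nat (fact k * fact (m - k) * (m choose k)) :: complex) = of_nat (fact m)" by simp
  then show ?thesis by (simp add: of_nat_fact algebra_simps)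
qed

text \<open>Substitution of (psibar,psi) is multiplicative: the subset convolution of |B|! F_{|B|} is the binomial convolution, i.e. the Cauchy product.\<close>
lemma gsubst_mult: "gmul (gsubst n F (dotpsi n)) (gsubst n G (dotpsi n)) = gsubst n (F * G) (dotpsi n)"
proof -
  have "gmul (gsubst n F (dotpsi n)) (gsubst n G (dotpsi n)) = tau_comb n (\<lambda>B. \<Sum>B1\<in>Pow B. subst_coeff F B1 * subst_coeff G (B - B1))"
    unfolding gsubst_dotpsi by (rule tau_comb_mult)
  also have "\<dots> = tau_comb n (subst_coeff (F * G))"
  proof (rule tau_comb_cong)
    fix B assume "B \<subseteq> {1..n}"
    then have fB: "finite B" by (auto intro: finite_subset)
    have "(\<Sum>B1\<in>Pow B. subst_coeff F B1 * subst_coeff G (B - B1)) =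
      (\<Sum>k\<le>card B. of_nat (card B choose k) * ((fact k * fps_nth F k) * (fact (card B - k) * fps_nth G (card B - k))))"
      unfolding subst_coeff_def by (rule conv_card[OF fB, where f = "\<lambda>k. fact k * fps_nth F k" and g = "\<lambda>k. fact k * fps_nth G k"])
    also have "\<dots> = (\<Sum>k\<le>card B. fact (card B) * (fps_nth F k * fps_nth G (card B - k)))"
    proof (rule sum.cong)
      fix k assume "k \<in> {..card B}"
      then have "(of_nat (card B choose k) :: complex) * (fact k * fact (card B - k)) = fact (card B)"
        by (intro binomial_fact_complex) auto
      then show "of_nat (card B choose k) * ((fact k * fps_nth F k) * (fact (card B - k) * fps_nth G (card B - k))) =
        fact (card B) * (fps_nth F k * fps_nth G (card B - k))"
        by (metis (no_types, lifting) mult.assoc mult.left_commute)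
    qed simp
    also have "\<dots> = subst_coeff (F * G) B"
      by (simp add: subst_coeff_def fps_mult_nth sum_distrib_left atLeast0AtMost)
    finally show "(\<Sum>B1\<in>Pow B. subst_coeff F B1 * subst_coeff G (B - B1)) = subst_coeff (F * G) B" .
  qed
  also have "\<dots> = gsubst n (F * G) (dotpsi n)" by (simp add: gsubst_dotpsi)
  finally show ?thesis .
qed

lemma gsubst_diff: "gsubst n (F - G) X = gsubst n F X - gsubst n G X"
  by (simp add: gsubst_def gsc_diff_scal sum_subtractf)

lemma gsubst_cmult: "gsubst n (fps_const c * F) X = gsc c (gsubst n F X)"
  by (simp only: gsubst_def gsc_sum gsc_gsc fps_mult_left_const_nth)

lemma gsubst_sum: "gsubst n (\<Sum>k\<in>A. F k) X = (\<Sum>k\<in>A. gsubst n (F k) X)"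
  unfolding gsubst_def fps_sum_nth gsc_sum_scal by (rule sum.swap)

lemma gsubst_zero: "gsubst n 0 X = 0"
  by (simp add: gsubst_def)

lemma gsubst_one: "gsubst n 1 (dotpsi n) = gone"
  unfolding gsubst_dotpsi gone_tau_comb[of n]
proof (rule tau_comb_cong)
  fix B assume "B \<subseteq> {1..n}"
  then have "finite B" by (auto intro: finite_subset)
  then show "subst_coeff 1 B = (if B = {} then 1 else 0)" by (simp add: subst_coeff_def)
qed

lemma gsubst_X: "gsubst n fps_X (dotpsi n) = dotpsi n"
  unfolding gsubst_dotpsi by (subst dotpsi_tau_comb, rule tau_comb_cong, simp add: subst_coeff_def fps_X_nth)

lemma gsubst_cong: "(\<And>m. m \<le> n \<Longrightarrow> fps_nth F m = fps_nth G m) \<Longrightarrow> gsubst n F (dotpsi n) = gsubst n G (dotpsi n)"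
  unfolding gsubst_dotpsi by (rule tau_comb_cong) (simp add: subst_coeff_def card_sub_interval_le)

lemma gpow_gsubst: "gpow (gsubst n F (dotpsi n)) k = gsubst n (F ^ k) (dotpsi n)"
  by (induct k) (simp_all add: gpow_0 gpow_Suc gsubst_one gsubst_mult)

lemma gsubst_empty: "gsubst n F (dotpsi n) {} = fps_nth F 0"
  by (simp add: gsubst_dotpsi tau_comb_empty subst_coeff_def)

lemma pair_supp_gsubst: "pair_supp (gsubst n F (dotpsi n))" by (simp add: gsubst_dotpsi pair_supp_tau_comb)

lemma parity_gsubst: "parity (gsubst n F (dotpsi n)) 0" by (simp add: gsubst_dotpsi parity_tau_comb)

lemma fsupp_gsubst: "fsupp (gsubst n F (dotpsi n))" by (simp add: gsubst_dotpsi fsupp_tau_comb)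

lemma gexp_gsubst:
  assumes F0: "fps_nth F 0 = 0"
  shows "gexp n (gsubst n F (dotpsi n)) = gsubst n (fps_exp 1 oo F) (dotpsi n)"
proof -
  let ?X = "gsubst n F (dotpsi n)"
  have "gexp n ?X = (\<Sum>k\<le>2 * n + 1. gsc (1 / fact k) (gpow ?X k))"
    by (simp add: gexp_def gsubst_empty F0)
  also have "\<dots> = (\<Sum>k\<le>2 * n + 1. gsubst n (fps_const (1 / fact k) * F ^ k) (dotpsi n))"
    by (simp add: gpow_gsubst gsubst_cmult)
  also have "\<dots> = gsubst n (\<Sum>k\<le>2 * n + 1. fps_const (1 / fact k) * F ^ k) (dotpsi n)"
    by (simp only: gsubst_sum)
  also have "\<dots> = gsubst n (fps_exp 1 oo F) (dotpsi n)"
  proof (rule gsubst_cong)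
    fix m assume m: "m \<le> n"
    have z: "\<And>k. m < k \<Longrightarrow> fps_nth (F ^ k) m = 0" using startsby_zero_power_prefix[OF F0] by blast
    have "fps_nth (\<Sum>k\<le>2 * n + 1. fps_const (1 / fact k) * F ^ k) m = (\<Sum>k\<le>2 * n + 1. (1 / fact k) * fps_nth (F ^ k) m)"
      by (simp add: fps_sum_nth fps_mult_left_const_nth)
    also have "\<dots> = (\<Sum>k\<in>{0..m}. (1 / fact k) * fps_nth (F ^ k) m)"
      by (rule sum.mono_neutral_right) (use m z in auto)
    also have "\<dots> = fps_nth (fps_exp 1 oo F) m"
      by (simp add: fps_compose_nth fps_exp_nth)
    finally show "fps_nth (\<Sum>k\<le>2 * n + 1. fps_const (1 / fact k) * F ^ k) m = fps_nth (fps_exp 1 oo F) m" .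
  qed
  finally show ?thesis .
qed

lemma berezin_tau_comb: "berezin n (tau_comb n c) = c {1..n}"
  unfolding berezin_def by (rule tau_comb_top)

lemma berezin_gsubst: "berezin n (gsubst n F (dotpsi n)) = fact n * fps_nth F n"
  unfolding gsubst_dotpsi berezin_tau_comb subst_coeff_def by simp

lemma berezin_diff: "berezin n (x - y) = berezin n x - berezin n y"
  by (simp add: berezin_def)

lemma berezin_sum: "berezin n (\<Sum>k\<in>A. f k) = (\<Sum>k\<in>A. berezin n (f k))"
  by (simp add: berezin_def sum_fun_apply)

section \<open>The exponent: sum_A w_|A| f_A = n W1((psibar,psi)) - P V((psibar,psi))\<close>

definition cross_term :: "nat \<Rightarrow> grass" where
  "cross_term n = (\<Sum>i\<in>{1..n}. \<Sum>j\<in>{1..n}. gmul (psib i) (psi j))"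

definition wser0 :: "(nat \<Rightarrow> complex) \<Rightarrow> complex fps" where
  "wser0 w = Abs_fps (\<lambda>m. w (m + 2) / fact m)"

lemma wser2_eq: "wser2 w = fps_X * wser0 w"
  by (rule fps_ext) (simp add: wser2_def wser0_def fps_X_mult_nth)

lemma psib_psi: "gmul (psib i) (psi j) = gsc (isign {2 * i} {2 * j + 1}) (basis {2 * i, 2 * j + 1})"
proof -
  have "2 * i \<noteq> 2 * j + 1" by presburger
  then have "{2 * i} \<inter> {2 * j + 1} = {}" by simp
  moreover have "{2 * i} \<union> {2 * j + 1} = {2 * i, 2 * j + 1}" by auto
  ultimately show ?thesis by (simp add: psib_def psi_def gen_basis gmul_basis_basis)
qed

lemma psibpsi_tau_zero:
  assumes "finite C" "i \<in> C \<or> j \<in> C"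
  shows "gmul (gmul (psib i) (psi j)) (tau C) = 0"
proof -
  have h: "\<not> {2 * i, 2 * j + 1} \<inter> pairs C = {}"
    using assms(2) by (auto simp: mem_pairs)
  have "gmul (basis {2 * i, 2 * j + 1}) (basis (pairs C)) = 0"
    by (subst gmul_basis_basis) (use h assms(1) pairs_finite in auto)
  then show ?thesis
    by (simp add: psib_psi gmul_gsc_left tau_basis assms(1))
qed

lemma parity_psibpsi: "parity (gmul (psib i) (psi j)) 0"
proof -
  have "2 * i \<noteq> 2 * j + 1" by presburger
  then have "card {2 * i, 2 * j + 1} = 2" by simp
  then show ?thesis unfolding psib_psi by (intro parity_gsc parity_basis) simp
qed

lemma wser1_dotpsi: "gsubst n (wser1 w) (dotpsi n) = tau_comb n (\<lambda>B. if B = {} then 0 else w (card B + 1))"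
  unfolding gsubst_dotpsi
proof (rule tau_comb_cong)
  fix B assume "B \<subseteq> {1..n}"
  then have "finite B" by (auto intro: finite_subset)
  then show "subst_coeff (wser1 w) B = (if B = {} then 0 else w (card B + 1))"
    by (simp add: subst_coeff_def wser1_def)
qed

lemma wser0_dotpsi: "gsubst n (wser0 w) (dotpsi n) = tau_comb n (\<lambda>B. w (card B + 2))"
  unfolding gsubst_dotpsi by (rule tau_comb_cong) (simp add: subst_coeff_def wser0_def)

lemma f0_diag_reindex:
  "(\<Sum>A\<in>{A. A \<subseteq> {1..n} \<and> card A \<ge> 2}. \<Sum>i\<in>A. gsc (w (card A)) (tau (A - {i}))) =
   (\<Sum>i\<in>{1..n}. \<Sum>B\<in>{B\<in>Pow ({1..n} - {i}). B \<noteq> {}}. gsc (w (card B + 1)) (tau B))"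
proof -
  have "(\<Sum>A\<in>{A. A \<subseteq> {1..n} \<and> card A \<ge> 2}. \<Sum>i\<in>A. gsc (w (card A)) (tau (A - {i}))) =
        (\<Sum>i\<in>{1..n}. \<Sum>B\<in>{B. B \<subseteq> {1..n} - {i} \<and> 1 \<le> card B}.
            gsc (w (card (insert i B))) (tau (insert i B - {i})))"
    by (rule sum_subsets_marked[where I = "{1..n}" and k = 1, OF finite_atLeastAtMost, unfolded one_add_one])
  also have "\<dots> = (\<Sum>i\<in>{1..n}. \<Sum>B\<in>{B\<in>Pow ({1..n} - {i}). B \<noteq> {}}. gsc (w (card B + 1)) (tau B))"
  proof (rule sum.cong[OF refl], rule sum.cong)
    fix i
    show "{B. B \<subseteq> {1..n} - {i} \<and> 1 \<le> card B} = {B\<in>Pow ({1..n} - {i}). B \<noteq> {}}"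
      by (auto simp: Suc_le_eq card_gt_0_iff dest: finite_sub_interval_diff)
  next
    fix i B assume B: "B \<in> {B\<in>Pow ({1..n} - {i}). B \<noteq> {}}"
    then have "finite B" by (auto dest: finite_sub_interval_diff)
    moreover have "i \<notin> B" using B by auto
    ultimately show "gsc (w (card (insert i B))) (tau (insert i B - {i})) = gsc (w (card B + 1)) (tau B)"
      by simp
  qed
  finally show ?thesis .
qed

lemma pairg_times_wser0:
  assumes i: "i \<in> {1..n}"
  shows "gmul (gmul (psib i) (psi i)) (gsubst n (wser0 w) (dotpsi n)) =
         (\<Sum>B\<in>{B\<in>Pow {1..n}. i \<in> B}. gsc (w (card B + 1)) (tau B))"
proof -
  have "gmul (gmul (psib i) (psi i)) (gsubst n (wser0 w) (dotpsi n)) =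
        (\<Sum>C\<in>Pow {1..n}. gsc (w (card C + 2)) (gmul (tau {i}) (tau C)))"
    unfolding wser0_dotpsi tau_comb_def by (simp add: gmul_sum_right gmul_gsc_right tau_single pairg_def)
  also have "\<dots> = (\<Sum>C\<in>Pow {1..n}. if i \<notin> C then gsc (w (card C + 2)) (tau (insert i C)) else 0)"
  proof (rule sum.cong)
    fix C assume "C \<in> Pow {1..n}"
    then have "finite C" using finite_sub_interval by blast
    then show "gsc (w (card C + 2)) (gmul (tau {i}) (tau C)) = (if i \<notin> C then gsc (w (card C + 2)) (tau (insert i C)) else 0)"
      by (simp add: tau_mul)
  qed simp
  also have "\<dots> = (\<Sum>C\<in>{C\<in>Pow {1..n}. i \<notin> C}. gsc (w (card C + 2)) (tau (insert i C)))"
    by (rule sum.inter_filter[symmetric]) simp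
  also have "\<dots> = (\<Sum>B\<in>{B\<in>Pow {1..n}. i \<in> B}. gsc (w (card B + 1)) (tau B))"
  proof (rule sum.reindex_bij_witness[where j = "insert i" and i = "\<lambda>B. B - {i}"])
    fix C assume C: "C \<in> {C\<in>Pow {1..n}. i \<notin> C}"
    then have "finite C" using finite_sub_interval by blast
    then show "gsc (w (card (insert i C) + 1)) (tau (insert i C)) = gsc (w (card C + 2)) (tau (insert i C))"
      using C by simp
  qed (use i in auto)
  finally show ?thesis .
qed

lemma nonempty_subsets_split:
  fixes n :: nat
  assumes i: "i \<in> {1..n}"
  shows "(\<Sum>B\<in>{B\<in>Pow {1..n}. B \<noteq> {}}. f B) =
         (\<Sum>B\<in>{B\<in>Pow ({1..n} - {i}). B \<noteq> {}}. f B) + (\<Sum>B\<in>{B\<in>Pow {1..n}. i \<in> B}. f B)"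
proof -
  have "{B\<in>Pow {1..n}. B \<noteq> {}} = {B\<in>Pow ({1..n} - {i}). B \<noteq> {}} \<union> {B\<in>Pow {1..n}. i \<in> B}"
    by auto
  moreover have "{B\<in>Pow ({1..n} - {i}). B \<noteq> {}} \<inter> {B\<in>Pow {1..n}. i \<in> B} = {}" by auto
  moreover have f1: "finite {B\<in>Pow ({1..n} - {i}). B \<noteq> {}}"
    by (rule finite_subset[of _ "Pow ({1..n} - {i})"]) auto
  moreover have f2: "finite {B\<in>Pow {1..n}. i \<in> B}"
    by (rule finite_subset[of _ "Pow {1..n}"]) auto
  ultimately show ?thesis by (simp only: sum.union_disjoint)
qed

lemma f0_offdiag_reindex:
  fixes X :: "nat \<Rightarrow> nat \<Rightarrow> nat set \<Rightarrow> grass"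
  shows "(\<Sum>A\<in>{A. A \<subseteq> {1..n} \<and> card A \<ge> 2}. \<Sum>i\<in>A. \<Sum>j\<in>A - {i}. gsc (w (card A)) (X i j (A - {i, j}))) =
   (\<Sum>i\<in>{1..n}. \<Sum>j\<in>{1..n} - {i}. \<Sum>C\<in>Pow ({1..n} - {i, j}). gsc (w (card C + 2)) (X i j C))"
proof -
  let ?g = "\<lambda>A i j. gsc (w (card A)) (X i j (A - {i, j}))"
  have "(\<Sum>A\<in>{A. A \<subseteq> {1..n} \<and> card A \<ge> 2}. \<Sum>i\<in>A. \<Sum>j\<in>A - {i}. ?g A i j) =
        (\<Sum>i\<in>{1..n}. \<Sum>B\<in>{B. B \<subseteq> {1..n} - {i} \<and> 1 \<le> card B}. \<Sum>j\<in>insert i B - {i}. ?g (insert i B) i j)"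
    by (rule sum_subsets_marked[where I = "{1..n}" and k = 1, OF finite_atLeastAtMost, unfolded one_add_one])
  also have "\<dots> = (\<Sum>i\<in>{1..n}. \<Sum>j\<in>{1..n} - {i}. \<Sum>C\<in>{C. C \<subseteq> {1..n} - {i} - {j} \<and> 0 \<le> card C}.
                     ?g (insert i (insert j C)) i j)"
  proof (rule sum.cong[OF refl])
    fix i
    have "(\<Sum>B\<in>{B. B \<subseteq> {1..n} - {i} \<and> 1 \<le> card B}. \<Sum>j\<in>insert i B - {i}. ?g (insert i B) i j) =
          (\<Sum>B\<in>{B. B \<subseteq> {1..n} - {i} \<and> 0 + 1 \<le> card B}. \<Sum>j\<in>B. ?g (insert i B) i j)"
      by (intro sum.cong) auto
    also have "\<dots> = (\<Sum>j\<in>{1..n} - {i}. \<Sum>C\<in>{C. C \<subseteq> {1..n} - {i} - {j} \<and> 0 \<le> card C}.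
                     ?g (insert i (insert j C)) i j)"
      by (rule sum_subsets_marked[where g = "\<lambda>B j. ?g (insert i B) i j"]) simp
    finally show "(\<Sum>B\<in>{B. B \<subseteq> {1..n} - {i} \<and> 1 \<le> card B}. \<Sum>j\<in>insert i B - {i}. ?g (insert i B) i j) =
          (\<Sum>j\<in>{1..n} - {i}. \<Sum>C\<in>{C. C \<subseteq> {1..n} - {i} - {j} \<and> 0 \<le> card C}. ?g (insert i (insert j C)) i j)" .
  qed
  also have "\<dots> = (\<Sum>i\<in>{1..n}. \<Sum>j\<in>{1..n} - {i}. \<Sum>C\<in>Pow ({1..n} - {i, j}). ?g (insert i (insert j C)) i j)"
    by (intro sum.cong) auto
  also have "\<dots> = (\<Sum>i\<in>{1..n}. \<Sum>j\<in>{1..n} - {i}. \<Sum>C\<in>Pow ({1..n} - {i, j}). gsc (w (card C + 2)) (X i j C))"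
  proof (intro sum.cong refl)
    fix i j C assume "j \<in> {1..n} - {i}" "C \<in> Pow ({1..n} - {i, j})"
    then have C: "finite C" "i \<notin> C" "j \<notin> C" "i \<noteq> j" by (auto dest: finite_sub_interval_diff)
    then have "insert i (insert j C) - {i, j} = C" by auto
    with C show "?g (insert i (insert j C)) i j = gsc (w (card C + 2)) (X i j C)" by simp
  qed
  finally show ?thesis .
qed

lemma psib_psi_times_wser0:
  fixes n :: nat
  assumes i: "i \<in> {1..n}" and j: "j \<in> {1..n}"
  shows "gmul (gmul (psib i) (psi j)) (gsubst n (wser0 w) (dotpsi n)) =
         (\<Sum>C\<in>Pow ({1..n} - {i, j}). gsc (w (card C + 2)) (gmul (gmul (psib i) (psi j)) (tau C)))"
proof -
  have "gmul (gmul (psib i) (psi j)) (gsubst n (wser0 w) (dotpsi n)) =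
        (\<Sum>C\<in>Pow {1..n}. gsc (w (card C + 2)) (gmul (gmul (psib i) (psi j)) (tau C)))"
    unfolding wser0_dotpsi tau_comb_def by (simp only: gmul_sum_right gmul_gsc_right)
  also have "\<dots> = (\<Sum>C\<in>Pow ({1..n} - {i, j}). gsc (w (card C + 2)) (gmul (gmul (psib i) (psi j)) (tau C)))"
  proof (rule sum.mono_neutral_right)
    show "\<forall>C\<in>Pow {1..n} - Pow ({1..n} - {i, j}). gsc (w (card C + 2)) (gmul (gmul (psib i) (psi j)) (tau C)) = 0"
    proof
      fix C assume C: "C \<in> Pow {1..n} - Pow ({1..n} - {i, j})"
      then have "finite C" using finite_sub_interval by blast
      moreover have "i \<in> C \<or> j \<in> C" using C by auto
      ultimately show "gsc (w (card C + 2)) (gmul (gmul (psib i) (psi j)) (tau C)) = 0"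
        by (simp add: psibpsi_tau_zero)
    qed
  qed auto
  finally show ?thesis .
qed

text \<open>The f_A-sum, reindexed: a diagonal part N_i and an off-diagonal part Q_i for every i.\<close>
lemma f0_sum_split:
  "(\<Sum>A\<in>{A. A \<subseteq> {1..n} \<and> card A \<ge> 2}. gsc (w (card A)) (f0 A)) =
   (\<Sum>i\<in>{1..n}. \<Sum>B\<in>{B\<in>Pow ({1..n} - {i}). B \<noteq> {}}. gsc (w (card B + 1)) (tau B)) -
   (\<Sum>i\<in>{1..n}. \<Sum>j\<in>{1..n} - {i}. \<Sum>C\<in>Pow ({1..n} - {i, j}).
      gsc (w (card C + 2)) (gmul (gmul (psib i) (psi j)) (tau C)))"
  unfolding f0_def gsc_diff gsc_sum sum_subtractf
  by (simp only: f0_diag_reindex f0_offdiag_reindex[where X = "\<lambda>i j C. gmul (gmul (psib i) (psi j)) (tau C)"])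

text \<open>n W1((psibar,psi)) = sum_i (N_i + I_i): for each i, the nonempty B either avoid i or contain it.\<close>
lemma scaled_wser1_split:
  "gsc (of_nat n) (gsubst n (wser1 w) (dotpsi n)) =
   (\<Sum>i\<in>{1..n}. (\<Sum>B\<in>{B\<in>Pow ({1..n} - {i}). B \<noteq> {}}. gsc (w (card B + 1)) (tau B))
              + (\<Sum>B\<in>{B\<in>Pow {1..n}. i \<in> B}. gsc (w (card B + 1)) (tau B)))"
proof -
  have "(of_nat n :: complex) = (\<Sum>i\<in>{1..n}. 1)" by simp
  then have "gsc (of_nat n) (gsubst n (wser1 w) (dotpsi n)) = (\<Sum>i\<in>{1..n}. gsubst n (wser1 w) (dotpsi n))"
    by (simp only: gsc_sum_scal gsc_1)
  also have "\<dots> = (\<Sum>i\<in>{1..n}. (\<Sum>B\<in>{B\<in>Pow ({1..n} - {i}). B \<noteq> {}}. gsc (w (card B + 1)) (tau B))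
              + (\<Sum>B\<in>{B\<in>Pow {1..n}. i \<in> B}. gsc (w (card B + 1)) (tau B)))"
    unfolding wser1_dotpsi tau_comb_nonempty by (rule sum.cong[OF refl nonempty_subsets_split])
  finally show ?thesis .
qed

text \<open>P V((psibar,psi)) = sum_i (I_i + Q_i): the diagonal terms psibar_i psi_i give I_i,
  the off-diagonal ones give Q_i.\<close>
lemma cross_term_times_wser0_split:
  "gmul (cross_term n) (gsubst n (wser0 w) (dotpsi n)) =
   (\<Sum>i\<in>{1..n}. (\<Sum>B\<in>{B\<in>Pow {1..n}. i \<in> B}. gsc (w (card B + 1)) (tau B))
     + (\<Sum>j\<in>{1..n} - {i}. \<Sum>C\<in>Pow ({1..n} - {i, j}).
          gsc (w (card C + 2)) (gmul (gmul (psib i) (psi j)) (tau C))))"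
  unfolding cross_term_def gmul_sum_left
proof (rule sum.cong[OF refl])
  fix i assume i: "i \<in> {1..n}"
  let ?V = "gsubst n (wser0 w) (dotpsi n)"
  have "(\<Sum>j\<in>{1..n}. gmul (gmul (psib i) (psi j)) ?V) =
        gmul (gmul (psib i) (psi i)) ?V + (\<Sum>j\<in>{1..n} - {i}. gmul (gmul (psib i) (psi j)) ?V)"
    using i by (simp add: sum.remove)
  also have "(\<Sum>j\<in>{1..n} - {i}. gmul (gmul (psib i) (psi j)) ?V) =
      (\<Sum>j\<in>{1..n} - {i}. \<Sum>C\<in>Pow ({1..n} - {i, j}). gsc (w (card C + 2)) (gmul (gmul (psib i) (psi j)) (tau C)))"
    by (rule sum.cong) (use i in \<open>auto simp: psib_psi_times_wser0\<close>)
  finally show "(\<Sum>j\<in>{1..n}. gmul (gmul (psib i) (psi j)) ?V) =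
      (\<Sum>B\<in>{B\<in>Pow {1..n}. i \<in> B}. gsc (w (card B + 1)) (tau B))
     + (\<Sum>j\<in>{1..n} - {i}. \<Sum>C\<in>Pow ({1..n} - {i, j}).
          gsc (w (card C + 2)) (gmul (gmul (psib i) (psi j)) (tau C)))"
    by (simp only: pairg_times_wser0[OF i])
qed

text \<open>The exponent identity: the I_i cancel, leaving n W1 - P V.\<close>
lemma f0_exponent_identity:
  "(\<Sum>A\<in>{A. A \<subseteq> {1..n} \<and> card A \<ge> 2}. gsc (w (card A)) (f0 A)) =
   gsc (of_nat n) (gsubst n (wser1 w) (dotpsi n)) - gmul (cross_term n) (gsubst n (wser0 w) (dotpsi n))"
  unfolding f0_sum_split scaled_wser1_split cross_term_times_wser0_split sum.distrib
  by (simp add: algebra_simps)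

section \<open>The cross term P\<close>

lemma cross_term_empty_coeff: "cross_term n {} = 0"
  by (simp add: cross_term_def sum_fun_apply gmul_empty psib_def psi_def gen_empty)

lemma parity_cross_term: "parity (cross_term n) 0"
  unfolding cross_term_def by (simp add: parity_sum parity_psibpsi)

text \<open>P is the product of two odd elements with odd squares zero, hence P^2 = 0.\<close>
lemma cross_term_square: "gmul (cross_term n) (cross_term n) = 0"
proof -
  define x where "x = (\<Sum>i\<in>{1..n}. psib i)"
  define y where "y = (\<Sum>j\<in>{1..n}. psi j)"
  have px: "parity x 1" unfolding x_def psib_def by (intro parity_sum parity_gen)
  have py: "parity y 1" unfolding y_def psi_def by (intro parity_sum parity_gen)
  have P: "cross_term n = gmul x y" unfolding cross_term_def x_def y_def by (simp only: gmul_sum_left, simp only: gmul_sum_right)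
  have "gmul y (gmul x y) = gmul (gmul y x) y" by (simp add: gmul_assoc)
  also have "\<dots> = gmul (gsc (-1) (gmul x y)) y" by (simp add: gmul_anti_odd[OF py px])
  also have "\<dots> = gsc (-1) (gmul x (gmul y y))" by (simp add: gmul_gsc_left gmul_assoc)
  also have "\<dots> = 0" by (simp add: gmul_odd_sq[OF py])
  finally have "gmul y (gmul x y) = 0" .
  then show ?thesis unfolding P by (simp add: gmul_assoc)
qed

lemma berezin_off_diagonal:
  fixes n :: nat
  assumes K: "pair_supp K" and i: "i \<in> {1..n}" and j: "j \<in> {1..n}" and ij: "i \<noteq> j"
  shows "berezin n (gmul K (gmul (psib i) (psi j))) = 0"
proof -
  let ?U = "{2..2 * n + 1}"
  let ?T = "{2 * i, 2 * j + 1}"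
  have "K (?U - ?T) = 0"
  proof (rule ccontr)
    assume "K (?U - ?T) \<noteq> 0"
    then have "2 * i \<in> ?U - ?T \<longleftrightarrow> 2 * i + 1 \<in> ?U - ?T" using K unfolding pair_supp_def by blast
    moreover have "2 * i \<notin> ?U - ?T" by simp
    moreover have "2 * i + 1 \<in> ?U - ?T" using i ij by auto
    ultimately show False by blast
  qed
  then show ?thesis
    unfolding berezin_def psib_psi gmul_gsc_right by (simp add: gsc_def gmul_basis_right)
qed

lemma berezin_cross_term_diag:
  fixes n :: nat
  assumes K: "pair_supp K"
  shows "berezin n (gmul K (cross_term n)) = berezin n (gmul K (dotpsi n))"
proof -
  have "berezin n (gmul K (cross_term n)) = (\<Sum>i\<in>{1..n}. \<Sum>j\<in>{1..n}. berezin n (gmul K (gmul (psib i) (psi j))))"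
    unfolding cross_term_def by (simp only: gmul_sum_right berezin_sum)
  also have "\<dots> = (\<Sum>i\<in>{1..n}. berezin n (gmul K (pairg i)))"
  proof (rule sum.cong)
    fix i assume i: "i \<in> {1..n}"
    have "(\<Sum>j\<in>{1..n}. berezin n (gmul K (gmul (psib i) (psi j)))) =
          berezin n (gmul K (gmul (psib i) (psi i))) + (\<Sum>j\<in>{1..n} - {i}. berezin n (gmul K (gmul (psib i) (psi j))))"
      using i by (simp add: sum.remove)
    also have "(\<Sum>j\<in>{1..n} - {i}. berezin n (gmul K (gmul (psib i) (psi j)))) = 0"
      by (rule sum.neutral) (use i K berezin_off_diagonal in auto)
    finally show "(\<Sum>j\<in>{1..n}. berezin n (gmul K (gmul (psib i) (psi j)))) = berezin n (gmul K (pairg i))"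
      by (simp add: pairg_def)
  qed simp
  also have "\<dots> = berezin n (gmul K (dotpsi n))"
    unfolding dotpsi_def by (simp only: gmul_sum_right berezin_sum)
  finally show ?thesis .
qed

section \<open>Exponentials of a difference\<close>

lemma gpow_minus_square_zero:
  assumes pa: "parity a 0" and pb: "parity b 0" and bb: "gmul b b = 0" and fa: "fsupp a" and fb: "fsupp b"
  shows "gpow (a - b) (Suc k) = gpow a (Suc k) - gsc (of_nat (Suc k)) (gmul (gpow a k) b)"
proof (induct k)
  case 0
  show ?case
    by (simp only: One_nat_def[symmetric] gpow_one[OF fsupp_diff[OF fa fb]] gpow_one[OF fa] gpow_0
        gmul_one_left[OF fb] of_nat_1 gsc_1)
next
  case (Suc k)
  have c1: "gmul b (gpow a (Suc k)) = gmul (gpow a (Suc k)) b"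
    by (rule gmul_comm_even_left[OF pb])  (rule parity_gpow[OF pa])
  have c2: "gmul b (gmul (gpow a k) b) = 0"
  proof -
    have "gmul b (gmul (gpow a k) b) = gmul (gmul b (gpow a k)) b" by (simp add: gmul_assoc)
    also have "\<dots> = gmul (gmul (gpow a k) b) b" by (simp add: gmul_comm_even_left[OF pb parity_gpow[OF pa]])
    also have "\<dots> = gmul (gpow a k) (gmul b b)" by (simp add: gmul_assoc)
    finally show ?thesis by (simp add: bb)
  qed
  have "gpow (a - b) (Suc (Suc k)) = gmul (a - b) (gpow a (Suc k) - gsc (of_nat (Suc k)) (gmul (gpow a k) b))"
    by (simp only: gpow_Suc[of "a - b" "Suc k"] Suc)
  also have "\<dots> = gmul a (gpow a (Suc k)) - gsc (of_nat (Suc k)) (gmul a (gmul (gpow a k) b))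
                   - gmul b (gpow a (Suc k)) + gsc (of_nat (Suc k)) (gmul b (gmul (gpow a k) b))"
    by (simp add: gmul_diff_left gmul_diff_right gmul_gsc_right gsc_diff algebra_simps)
  also have "\<dots> = gpow a (Suc (Suc k)) - gsc (of_nat (Suc (Suc k))) (gmul (gpow a (Suc k)) b)"
    by (simp only: c1 c2 c2[unfolded gmul_assoc[symmetric]] gsc_0 add_0_right gpow_Suc[of a "Suc k"] gmul_assoc[symmetric] gpow_Suc[of a k, symmetric]
          gsc_Suc[of "Suc k"]) (simp add: algebra_simps)
  finally show ?case .
qed

lemma gpow_minus_square_zero_scaled:
  assumes pa: "parity a 0" and pb: "parity b 0" and bb: "gmul b b = 0" and fa: "fsupp a" and fb: "fsupp b"
  shows "gsc (1 / fact (Suc k)) (gpow (a - b) (Suc k)) =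
         gsc (1 / fact (Suc k)) (gpow a (Suc k)) - gsc (1 / fact k) (gmul (gpow a k) b)"
proof -
  have g: "\<And>x y :: complex. x \<noteq> 0 \<Longrightarrow> 1 / (x * y) * x = 1 / y" by (simp add: field_simps)
  have "(1 / fact (Suc k) :: complex) * of_nat (Suc k) = 1 / fact k"
    by (simp only: fact_Suc of_nat_mult) (rule g[OF of_nat_neq_0])
  then show ?thesis
    by (simp add: gpow_minus_square_zero[OF pa pb bb fa fb] gsc_diff gsc_gsc)
qed

lemma gexp_zero_body: "X {} = 0 \<Longrightarrow> gexp n X = (\<Sum>k\<le>2 * n + 1. gsc (1 / fact k) (gpow X k))"
  by (simp add: gexp_def)

lemma fsupp_gexp: assumes "X {} = 0" shows "fsupp (gexp n X)"
  unfolding gexp_zero_body[of X n, OF assms] by (intro fsupp_sum fsupp_gsc fsupp_gpow)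

lemma gexp_minus_square_zero:
  assumes pa: "parity a 0" and pb: "parity b 0" and bb: "gmul b b = 0" and fa: "fsupp a" and fb: "fsupp b"
    and a0: "a {} = 0" and b0: "b {} = 0" and aN: "gpow a (2 * n + 1) = 0"
  shows "gexp n (a - b) = gmul (gexp n a) (gone - b)"
proof -
  let ?E = "\<lambda>M. (\<Sum>k\<le>M. gsc (1 / fact k) (gpow a k))"
  have Ea: "gexp n a = ?E (Suc (2 * n))" by (simp only: gexp_zero_body[of a n, OF a0] Suc_eq_plus1)
  have EM: "?E (Suc (2 * n)) = ?E (2 * n)"
    by (simp only: sum.atMost_Suc aN[unfolded Suc_eq_plus1[symmetric]] gsc_0 add_0_right)
  have ab0: "(a - b) {} = 0" using a0 b0 by simp
  have "gexp n (a - b) = (\<Sum>k\<le>Suc (2 * n). gsc (1 / fact k) (gpow (a - b) k))"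
    by (simp only: gexp_zero_body[of "a - b" n, OF ab0] Suc_eq_plus1)
  also have "\<dots> = gsc (1 / fact 0) (gpow (a - b) 0) + (\<Sum>k\<le>2 * n. gsc (1 / fact (Suc k)) (gpow (a - b) (Suc k)))"
    by (rule sum.atMost_Suc_shift)
  also have "\<dots> = gsc (1 / fact 0) (gpow a 0) + (\<Sum>k\<le>2 * n. gsc (1 / fact (Suc k)) (gpow a (Suc k)))
                  - (\<Sum>k\<le>2 * n. gsc (1 / fact k) (gmul (gpow a k) b))"
    by (simp only: gpow_minus_square_zero_scaled[OF pa pb bb fa fb] sum_subtractf gpow_0 add_diff_eq)
  also have "\<dots> = ?E (Suc (2 * n)) - gmul (?E (2 * n)) b"
    by (simp only: sum.atMost_Suc_shift[of "\<lambda>k. gsc (1 / fact k) (gpow a k)" "2 * n"] gmul_sum_left gmul_gsc_left)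
  also have "\<dots> = ?E (Suc (2 * n)) - gmul (?E (Suc (2 * n))) b"
    by (simp only: EM)
  also have "\<dots> = gmul (gexp n a) (gone - b)"
    by (simp only: Ea[symmetric] gmul_diff_right gmul_one_right[OF fsupp_gexp[of a n, OF a0]])
  finally show ?thesis .
qed

text \<open>A substituted power series without constant term is nilpotent: its k-th power
  starts at xi^k, which is invisible on n pairs once k > n.\<close>
lemma gpow_gsubst_nilpotent:
  assumes F0: "fps_nth F 0 = 0" and k: "n < k"
  shows "gpow (gsubst n F (dotpsi n)) k = 0"
proof -
  have "gpow (gsubst n F (dotpsi n)) k = gsubst n (F ^ k) (dotpsi n)" by (rule gpow_gsubst)
  also have "\<dots> = gsubst n 0 (dotpsi n)"
  proof (rule gsubst_cong)
    fix m assume "m \<le> n"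
    with k have "m < k" by simp
    then show "fps_nth (F ^ k) m = fps_nth 0 m"
      using startsby_zero_power_prefix[OF F0, of k] by simp
  qed
  finally show ?thesis by (simp add: gsubst_zero)
qed

text \<open>The interaction term P X, for X even, squares to zero because P does.\<close>
lemma cross_term_times_even_square:
  assumes "parity X 0"
  shows "gmul (gmul (cross_term n) X) (gmul (cross_term n) X) = 0"
proof -
  let ?P = "cross_term n"
  have "gmul (gmul ?P X) (gmul ?P X) = gmul ?P (gmul (gmul X ?P) X)" by (simp add: gmul_assoc)
  also have "\<dots> = gmul ?P (gmul (gmul ?P X) X)"
    by (simp add: gmul_comm_even_left[OF assms parity_cross_term])
  also have "\<dots> = gmul (gmul ?P ?P) (gmul X X)" by (simp add: gmul_assoc)
  also have "\<dots> = 0" by (simp add: cross_term_square)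
  finally show ?thesis .
qed

lemma gexp_scaled_wser1:
  "gexp n (gsc (of_nat n) (gsubst n (wser1 w) (dotpsi n)))
   = gsubst n (fps_exp 1 oo (of_nat n * wser1 w)) (dotpsi n)"
proof -
  have "of_nat n * wser1 w = fps_const (of_nat n) * wser1 w" by (simp add: fps_of_nat)
  then have "gsc (of_nat n) (gsubst n (wser1 w) (dotpsi n)) = gsubst n (of_nat n * wser1 w) (dotpsi n)"
    by (simp only: gsubst_cmult)
  moreover have "fps_nth (of_nat n * wser1 w) 0 = 0" by (simp add: wser1_def fps_of_nat)
  ultimately show ?thesis by (simp add: gexp_gsubst)
qed

lemma gexp_interaction:
  "gexp n (\<Sum>A\<in>{A. A \<subseteq> {1..n} \<and> card A \<ge> 2}. gsc (w (card A)) (f0 A))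
   = gmul (gexp n (gsc (of_nat n) (gsubst n (wser1 w) (dotpsi n))))
          (gone - gmul (cross_term n) (gsubst n (wser0 w) (dotpsi n)))"
proof -
  define F where "F = of_nat n * wser1 w"
  let ?a = "gsc (of_nat n) (gsubst n (wser1 w) (dotpsi n))"
  let ?b = "gmul (cross_term n) (gsubst n (wser0 w) (dotpsi n))"
  have F0: "fps_nth F 0 = 0" by (simp add: F_def wser1_def fps_of_nat)
  have "F = fps_const (of_nat n) * wser1 w" by (simp add: F_def fps_of_nat)
  then have aF: "?a = gsubst n F (dotpsi n)" by (simp only: gsubst_cmult)
  have "gexp n (?a - ?b) = gmul (gexp n ?a) (gone - ?b)"
  proof (rule gexp_minus_square_zero)
    show "parity ?a 0" "fsupp ?a" unfolding aF by (rule parity_gsubst fsupp_gsubst)+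
    show "?a {} = 0" unfolding aF by (simp add: gsubst_empty F0)
    show "gpow ?a (2 * n + 1) = 0" unfolding aF by (rule gpow_gsubst_nilpotent[OF F0]) simp
    show "parity ?b 0" using parity_gmul[OF parity_cross_term parity_gsubst] by simp
    show "fsupp ?b" by (rule fsupp_gmul)
    show "?b {} = 0" by (simp add: gmul_empty cross_term_empty_coeff)
    show "gmul ?b ?b = 0" by (rule cross_term_times_even_square[OF parity_gsubst])
  qed
  then show ?thesis by (simp only: f0_exponent_identity)
qed

lemma berezin_cross_term_wser2:
  "berezin n (gmul (gsubst n F (dotpsi n)) (gone - gmul (cross_term n) (gsubst n (wser0 w) (dotpsi n))))
   = berezin n (gmul (gsubst n F (dotpsi n)) (gone - gsubst n (wser2 w) (dotpsi n)))"
proof -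
  let ?D = "dotpsi n"
  let ?G = "gsubst n F ?D"
  let ?V = "gsubst n (wser0 w) ?D"
  let ?P = "cross_term n"
  let ?K = "gsubst n (F * wser0 w) ?D"
  have GP: "gmul ?G (gmul ?P ?V) = gmul ?K ?P"
  proof -
    have "gmul ?G (gmul ?P ?V) = gmul (gmul ?P ?G) ?V"
      by (simp add: gmul_assoc[symmetric] gmul_comm_even_left[OF parity_gsubst parity_cross_term])
    also have "\<dots> = gmul ?P ?K" by (simp add: gmul_assoc gsubst_mult)
    also have "\<dots> = gmul ?K ?P" by (rule gmul_comm_even_right[OF parity_cross_term parity_gsubst])
    finally show ?thesis .
  qed
  have "wser2 w = wser0 w * fps_X" by (simp add: wser2_eq mult.commute)
  then have GW: "gmul ?G (gsubst n (wser2 w) ?D) = gmul ?K ?D"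
    by (simp only: gsubst_mult[symmetric] gsubst_X gmul_assoc)
  show ?thesis
    by (simp only: gmul_diff_right gmul_one_right[OF fsupp_gsubst] berezin_diff GP GW
        berezin_cross_term_diag[OF pair_supp_gsubst])
qed

text \<open>The argument does not use the hypothesis n \<ge> 1.\<close>
theorem mainTheorem6:
  fixes n :: nat and w :: "nat \<Rightarrow> complex" and h :: "complex fps"
  assumes "n \<ge> 1"
  shows "berezin n (gmul (gsubst n h (dotpsi n))
            (gexp n (\<Sum>A\<in>{A. A \<subseteq> {1..n} \<and> card A \<ge> 2}. gsc (w (card A)) (f0 A))))
       = berezin n (gmul (gmul (gsubst n h (dotpsi n))
            (gexp n (gsc (of_nat n) (gsubst n (wser1 w) (dotpsi n)))))
            (gone - gsubst n (wser2 w) (dotpsi n)))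
     \<and> berezin n (gmul (gmul (gsubst n h (dotpsi n))
            (gexp n (gsc (of_nat n) (gsubst n (wser1 w) (dotpsi n)))))
            (gone - gsubst n (wser2 w) (dotpsi n)))
       = fact n * fps_nth (h * (1 - wser2 w) * (fps_exp 1 oo (of_nat n * wser1 w))) n"
proof -
  let ?D = "dotpsi n"
  let ?E = "fps_exp 1 oo (of_nat n * wser1 w)"
  have HE: "gmul (gsubst n h ?D) (gsubst n ?E ?D) = gsubst n (h * ?E) ?D" by (rule gsubst_mult)
  have first: "berezin n (gmul (gsubst n h ?D)
      (gexp n (\<Sum>A\<in>{A. A \<subseteq> {1..n} \<and> card A \<ge> 2}. gsc (w (card A)) (f0 A))))
    = berezin n (gmul (gsubst n (h * ?E) ?D) (gone - gsubst n (wser2 w) ?D))"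
    by (simp only: gexp_interaction gexp_scaled_wser1 gmul_assoc[symmetric] HE berezin_cross_term_wser2)
  have "gone - gsubst n (wser2 w) ?D = gsubst n (1 - wser2 w) ?D" by (simp only: gsubst_diff gsubst_one)
  then have "gmul (gsubst n (h * ?E) ?D) (gone - gsubst n (wser2 w) ?D)
      = gsubst n (h * (1 - wser2 w) * ?E) ?D"
    by (simp only: gsubst_mult) (simp only: ac_simps)
  then have second: "berezin n (gmul (gsubst n (h * ?E) ?D) (gone - gsubst n (wser2 w) ?D))
      = fact n * fps_nth (h * (1 - wser2 w) * ?E) n"
    by (simp add: berezin_gsubst)
  show ?thesis by (simp only: gexp_scaled_wser1 HE first second)
qed

end
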